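(* Let $n>d$, $\mathbf X\in\mathbb R^{n\times d}$ fixed with full column rank, $1\le k<d$, and $\mathbf y\sim\mathcal N(\mathbf X\boldsymbol\beta,\sigma^2\mathbf I_n)$. Let $\hat{\boldsymbol\beta}_{\mathrm{OLS}}=(\mathbf X^T\mathbf X)^{-1}\mathbf X^T\mathbf y$ and let $$F(\mathbf y)=\frac{(\|\mathbf y-\mathbf P_{-1:k}\mathbf y\|^2-\|\mathbf y-\mathbf P\mathbf y\|^2)/k}{\|\mathbf y-\mathbf P\mathbf y\|^2/(n-d)}$$ be the $F$-test statistic for $H_{1:k}:\boldsymbol\beta_{1:k}=\mathbf 0$, with $F$-test p-value $p_F(\mathbf y)=\mathbb P(F_{k,n-d}\ge F(\mathbf y))$, where $F_{k,n-d}$ has the $F$-distribution with $(k,n-d)$ degrees of freedom. Let $\tilde{\mathbf u}$ be uniform on $\mathbb S^{n-d+k-1}$ independent of $\mathbf y$ and $\tilde{\mathbf y}=\hat{\mathbf y}_{1:k}+\hat\sigma_{1:k}\mathbf V\tilde{\mathbf u}$ (so that, under $H_{1:k}$, $\tilde{\mathbf y}$ has the conditional law of $\mathbf y$ given $\mathbf S^{(1:k)}=(\mathbf X_{-1:k}^T\mathbf y,\mathbf y^T\mathbf y)$). Then the $F$-test is equivalent to the test that rejects for large values of $\|\mathbf V_{1:k}^T\mathbf X_{1:k}\hat{\boldsymbol\beta}_{1:k,\mathrm{OLS}}\|$ conditional on $\mathbf S^{(1:k)}$, and also to the conditional test rejecting for large values of $\|\mathbf u_{1:k}\|$; that is, almost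 surely, $$p_F(\mathbf y)=\mathbb P\big(\|\mathbf V_{1:k}^T\mathbf X_{1:k}\hat{\boldsymbol\beta}_{1:k,\mathrm{OLS}}(\tilde{\mathbf y})\|\ge\|\mathbf V_{1:k}^T\mathbf X_{1:k}\hat{\boldsymbol\beta}_{1:k,\mathrm{OLS}}(\mathbf y)\|\,\big|\,\mathbf y\big)=\mathbb P\big(\|\tilde{\mathbf u}_{1:k}\|\ge\|\mathbf u_{1:k}\|\,\big|\,\mathbf y\big).$$
   Context: $\mathbf A_i$, $\mathbf A_{1:i}$, $\mathbf A_{-1:i}$ denote the $i$-th column, first $i$ columns, and submatrix with first $i$ columns removed (similarly for vectors). $\mathbf P$ is the orthogonal projection onto the column space of $\mathbf X$, and $\mathbf P_{-1:i}$ onto that of $\mathbf X_{-1:i}$. $\mathbf V\in\mathbb R^{n\times(n-d+k)}$ has orthonormal columns spanning the orthogonal complement of the column space of $\mathbf X_{-1:k}$, with first $k$ columns $\mathbf V_i=(\mathbf I-\mathbf P_{-1:i})\mathbf X_i/\|(\mathbf I-\mathbf P_{-1:i})\mathbf X_i\|$. $\hat{\mathbf y}_{1:k}=\mathbf P_{-1:k}\mathbf y$, $\hat\sigma_{1:k}=\|(\mathbf I-\mathbf P_{-1:k})\mathbf y\|$, $\mathbf u=\mathbf V^T(\mathbf y-\hat{\mathbf y}_{1:k})/\hat\sigma_{1:k}$. The precise "equality of p-values" formulation is our rendering of the paper's statement that the tests are equivalent. *)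

theory Defs
  imports "HOL-Probability.Probability"
begin

text \<open>Vectors in R^n are functions nat => real, only the coordinates 0..n-1 matter.
  Matrices are functions nat => nat => real (row index, column index).
  Indices are 0-based: column j of the paper is column j-1 here.\<close>

definition ipn :: "nat \<Rightarrow> (nat \<Rightarrow> real) \<Rightarrow> (nat \<Rightarrow> real) \<Rightarrow> real" where
  "ipn n x y = (\<Sum>i<n. x i * y i)"

definition nrm :: "nat \<Rightarrow> (nat \<Rightarrow> real) \<Rightarrow> real" where
  "nrm n x = sqrt (ipn n x x)"

definition col :: "(nat \<Rightarrow> nat \<Rightarrow> real) \<Rightarrow> nat \<Rightarrow> nat \<Rightarrow> real" where
  "col A j = (\<lambda>i. A i j)"

definition colspace :: "nat \<Rightarrow> (nat \<Rightarrow> nat \<Rightarrow> real) \<Rightarrow> nat set \<Rightarrow> (nat \<Rightarrow> real) set" where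
  "colspace n A J = {v. \<exists>c. \<forall>i<n. v i = (\<Sum>j\<in>J. c j * A i j)}"

definition orth_compl :: "nat \<Rightarrow> (nat \<Rightarrow> real) set \<Rightarrow> (nat \<Rightarrow> real) set" where
  "orth_compl n S = {v. \<forall>w\<in>S. ipn n v w = 0}"

definition proj :: "nat \<Rightarrow> (nat \<Rightarrow> nat \<Rightarrow> real) \<Rightarrow> nat set \<Rightarrow> (nat \<Rightarrow> real) \<Rightarrow> nat \<Rightarrow> real" where
  "proj n A J y = (THE p. (\<forall>i\<ge>n. p i = 0) \<and> p \<in> colspace n A J \<and>
                      (\<forall>w\<in>colspace n A J. ipn n (\<lambda>i. y i - p i) w = 0))"

definition matinv :: "nat \<Rightarrow> (nat \<Rightarrow> nat \<Rightarrow> real) \<Rightarrow> nat \<Rightarrow> nat \<Rightarrow> real" where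
  "matinv d G = (THE H. (\<forall>i<d. \<forall>j<d. (\<Sum>l<d. H i l * G l j) = (if i = j then 1 else 0)) \<and>
                        (\<forall>i<d. \<forall>j<d. (\<Sum>l<d. G i l * H l j) = (if i = j then 1 else 0)) \<and>
                        (\<forall>i j. d \<le> i \<or> d \<le> j \<longrightarrow> H i j = 0))"

definition ols :: "nat \<Rightarrow> nat \<Rightarrow> (nat \<Rightarrow> nat \<Rightarrow> real) \<Rightarrow> (nat \<Rightarrow> real) \<Rightarrow> nat \<Rightarrow> real" where
  "ols n d X y = (\<lambda>j. \<Sum>l<d. matinv d (\<lambda>a b. \<Sum>i<n. X i a * X i b) j l * (\<Sum>i<n. X i l * y i))"

definition full_col_rank :: "nat \<Rightarrow> nat \<Rightarrow> (nat \<Rightarrow> nat \<Rightarrow> real) \<Rightarrow> bool" where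
  "full_col_rank n d X \<longleftrightarrow> (\<forall>c. (\<forall>i<n. (\<Sum>j<d. c j * X i j) = 0) \<longrightarrow> (\<forall>j<d. c j = 0))"

definition Leb :: "nat \<Rightarrow> (nat \<Rightarrow> real) measure" where
  "Leb m = PiM {..<m} (\<lambda>_. lborel)"

definition gauss :: "nat \<Rightarrow> (nat \<Rightarrow> real) \<Rightarrow> real \<Rightarrow> (nat \<Rightarrow> real) measure" where
  "gauss n mu \<sigma> = PiM {..<n} (\<lambda>i. density lborel (normal_density (mu i) \<sigma>))"

text \<open>Uniform (normalized surface) measure on the unit sphere S^{m-1} in R^m, defined as the
  cone measure: sigma(A) = Leb({t u : u in A, 0 <= t <= 1}) / Leb(unit ball), i.e. the image of
  the uniform distribution on the unit ball under x |-> x / |x|.\<close>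
definition unif_sphere :: "nat \<Rightarrow> (nat \<Rightarrow> real) measure" where
  "unif_sphere m = distr (uniform_measure (Leb m) {x \<in> space (Leb m). nrm m x \<le> 1}) (Leb m)
                        (\<lambda>x. restrict (\<lambda>i. x i / nrm m x) {..<m})"

definition F_density :: "nat \<Rightarrow> nat \<Rightarrow> real \<Rightarrow> real" where
  "F_density k m x = (if 0 < x then
      (real k / real m) powr (real k / 2) * x powr (real k / 2 - 1)
      * (1 + real k * x / real m) powr (- (real k + real m) / 2) / Beta (real k / 2) (real m / 2)
    else 0)"

definition F_dist :: "nat \<Rightarrow> nat \<Rightarrow> real measure" where
  "F_dist k m = density lborel (F_density k m)"

end

(*
  Write z_a = <V_a, y> for a < m = n - d + k.  The columns of V are an orthonormal basis of the
  orthogonal complement of the last d - k columns of X, and the first k of them lie in the column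
  space of X.  Hence ||y - P_{-1:k} y||^2 = sum_{a<m} z_a^2 and ||y - P y||^2 = sum_{k<=a<m} z_a^2,
  so with q = n - d the F-statistic is (q/k) B/(1 - B) for B = ||u_{1:k}||^2, the share of the
  first k coordinates.  On the fibre y~ = y^_{1:k} + sigma^ V u~ the statistic
  V_{1:k}^T X_{1:k} beta^_{1:k} equals sigma^ u~_{1:k} (and sigma^ u_{1:k} at y itself), so both
  conditional p-values are the probability that ||u~_{1:k}||^2 >= B for u~ uniform on the sphere.
  That law is Beta(k/2, q/2) (cone measure, Fubini and polar coordinates), and so is the law of
  kF/(q + kF) for F ~ F_{k,q} (change of variables), which gives p_F.  The y with B = 0 or B = 1
  lie in two hyperplanes, which are Gaussian null sets.
*)

theory Submission
  imports Defs "Jordan_Normal_Form.Determinant"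
begin

hide_const (open) Matrix.col

section \<open>Inner products and column spaces\<close>

lemma ipn_commute: "ipn n x y = ipn n y x"
  by (simp add: ipn_def mult.commute)

lemma ipn_self_nonneg: "0 \<le> ipn n x x"
  by (simp add: ipn_def sum_nonneg)

lemma ipn_self_eq_0_iff: "ipn n x x = 0 \<longleftrightarrow> (\<forall>i<n. x i = 0)"
  unfolding ipn_def by (subst sum_nonneg_eq_0_iff) auto

lemma ipn_cong:
  "(\<And>i. i < n \<Longrightarrow> x i = x' i) \<Longrightarrow> (\<And>i. i < n \<Longrightarrow> y i = y' i) \<Longrightarrow> ipn n x y = ipn n x' y'"
  unfolding ipn_def by (intro sum.cong) auto

lemma ipn_add_right: "ipn n z (\<lambda>i. x i + y i) = ipn n z x + ipn n z y"
  unfolding ipn_def by (simp add: algebra_simps sum.distrib)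

lemma ipn_diff_right: "ipn n z (\<lambda>i. x i - y i) = ipn n z x - ipn n z y"
  unfolding ipn_def by (simp add: algebra_simps sum_subtractf)

lemma ipn_diff_left: "ipn n (\<lambda>i. x i - y i) z = ipn n x z - ipn n y z"
  by (simp add: ipn_commute[of n _ z] ipn_diff_right)

lemma ipn_scale_right: "ipn n z (\<lambda>i. c * x i) = c * ipn n z x"
  unfolding ipn_def by (simp add: algebra_simps sum_distrib_left)

lemma ipn_scale_left: "ipn n (\<lambda>i. c * x i) z = c * ipn n x z"
  by (simp add: ipn_commute[of n _ z] ipn_scale_right)

lemma ipn_sum_right: "ipn n x (\<lambda>i. \<Sum>j\<in>J. c j * A i j) = (\<Sum>j\<in>J. c j * ipn n x (col A j))"
  unfolding ipn_def Defs.col_def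
  by (simp add: sum_distrib_left sum_distrib_right mult_ac sum.swap[of _ J])

lemma nrm_sq: "(nrm n x)\<^sup>2 = ipn n x x"
  by (simp add: nrm_def ipn_self_nonneg)

lemma nrm_nonneg: "0 \<le> nrm n x"
  by (simp add: nrm_def ipn_self_nonneg)

lemma nrm_eq_sqrt_sum_sq: "nrm n x = sqrt (\<Sum>i<n. (x i)\<^sup>2)"
  by (simp add: nrm_def ipn_def power2_eq_square)

lemma nrm_cong: "(\<And>i. i < n \<Longrightarrow> x i = y i) \<Longrightarrow> nrm n x = nrm n y"
  unfolding nrm_def by (simp cong: ipn_cong)

lemma nrm_scale: "nrm n (\<lambda>i. c * x i) = \<bar>c\<bar> * nrm n x"
  by (simp add: nrm_eq_sqrt_sum_sq power_mult_distrib sum_distrib_left[symmetric] real_sqrt_mult)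

lemma sum_lessThan_split:
  fixes f :: "nat \<Rightarrow> 'a::comm_monoid_add"
  assumes "k \<le> d"
  shows "sum f {..<d} = sum f {..<k} + sum f {k..<d}"
proof -
  have "sum f ({..<k} \<union> {k..<d}) = sum f {..<k} + sum f {k..<d}"
    by (rule sum.union_disjoint) auto
  with ivl_disj_un_one(2)[OF assms] show ?thesis
    by simp
qed

lemma col_in_colspace: "finite J \<Longrightarrow> j \<in> J \<Longrightarrow> col A j \<in> colspace n A J"
  unfolding colspace_def Defs.col_def
  by (intro CollectI exI[of _ "\<lambda>l. if l = j then 1 else 0"])
     (simp add: if_distrib[where f = "\<lambda>x. x * _"] cong: if_cong)

lemma colspace_lincomb:
  assumes "v \<in> colspace n A J" "w \<in> colspace n A J"
  shows "(\<lambda>i. a * v i + b * w i) \<in> colspace n A J"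
proof -
  obtain cv cw where "\<forall>i<n. v i = (\<Sum>j\<in>J. cv j * A i j)" "\<forall>i<n. w i = (\<Sum>j\<in>J. cw j * A i j)"
    using assms unfolding colspace_def by auto
  then show ?thesis
    unfolding colspace_def
    by (intro CollectI exI[of _ "\<lambda>j. a * cv j + b * cw j"])
       (simp add: algebra_simps sum.distrib sum_distrib_left)
qed

lemma colspace_diff: "v \<in> colspace n A J \<Longrightarrow> w \<in> colspace n A J \<Longrightarrow> (\<lambda>i. v i - w i) \<in> colspace n A J"
  using colspace_lincomb[of v n A J w 1 "- 1"] by simp

lemma colspace_cong:
  "v \<in> colspace n A J \<Longrightarrow> (\<And>i. i < n \<Longrightarrow> v i = w i) \<Longrightarrow> w \<in> colspace n A J"
  unfolding colspace_def by auto

lemma colspace_mono: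
  assumes "J \<subseteq> K" "finite K"
  shows "colspace n A J \<subseteq> colspace n A K"
proof
  fix v assume "v \<in> colspace n A J"
  then obtain c where c: "\<forall>i<n. v i = (\<Sum>j\<in>J. c j * A i j)"
    unfolding colspace_def by auto
  have "(\<Sum>j\<in>K. (if j \<in> J then c j else 0) * A i j) = (\<Sum>j\<in>J. c j * A i j)" for i
    using assms by (intro sum.mono_neutral_cong_right) auto
  then show "v \<in> colspace n A K"
    unfolding colspace_def using c by (intro CollectI exI[of _ "\<lambda>j. if j \<in> J then c j else 0"]) simp
qed

lemma ipn_colspace_eq_0:
  assumes "w \<in> colspace n A J" "\<And>j. j \<in> J \<Longrightarrow> ipn n x (col A j) = 0"
  shows "ipn n x w = 0"
proof -
  obtain c where c: "\<forall>i<n. w i = (\<Sum>j\<in>J. c j * A i j)"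
    using assms(1) unfolding colspace_def by auto
  then have "ipn n x w = ipn n x (\<lambda>i. \<Sum>j\<in>J. c j * A i j)"
    by (intro ipn_cong) auto
  also have "\<dots> = 0"
    using assms(2) by (simp add: ipn_sum_right)
  finally show ?thesis .
qed

lemma ipn_colspace_insert_eq_0:
  assumes "finite J" "w \<in> colspace n A (insert j J)"
    and "\<And>v. v \<in> colspace n A J \<Longrightarrow> ipn n x v = 0" and "ipn n x (col A j) = 0"
  shows "ipn n x w = 0"
  using assms(2)
proof (rule ipn_colspace_eq_0)
  fix l assume "l \<in> insert j J"
  then show "ipn n x (col A l) = 0"
    using assms(1,3,4) col_in_colspace[of J l A n] by auto
qed

section \<open>Orthogonal projections\<close>

definition is_proj :: "nat \<Rightarrow> (nat \<Rightarrow> nat \<Rightarrow> real) \<Rightarrow> nat set \<Rightarrow> (nat \<Rightarrow> real) \<Rightarrow> (nat \<Rightarrow> real) \<Rightarrow> bool"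
  where "is_proj n A J y p \<longleftrightarrow> (\<forall>i\<ge>n. p i = 0) \<and> p \<in> colspace n A J \<and>
    (\<forall>w\<in>colspace n A J. ipn n (\<lambda>i. y i - p i) w = 0)"

lemma proj_eqI:
  assumes "is_proj n A J y p"
  shows "proj n A J y = p"
  unfolding proj_def is_proj_def[symmetric]
proof (rule the_equality)
  fix p' assume p': "is_proj n A J y p'"
  define D where "D = (\<lambda>i. p' i - p i)"
  have D: "D \<in> colspace n A J"
    unfolding D_def using p' assms by (intro colspace_diff) (auto simp: is_proj_def)
  have "ipn n D D = ipn n (\<lambda>i. (y i - p i) - (y i - p' i)) D"
    by (simp add: D_def)
  also have "\<dots> = ipn n (\<lambda>i. y i - p i) D - ipn n (\<lambda>i. y i - p' i) D"
    by (rule ipn_diff_left)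
  also have "\<dots> = 0"
    using D p' assms by (simp add: is_proj_def)
  finally have "\<forall>i<n. p' i = p i"
    by (simp add: ipn_self_eq_0_iff D_def)
  moreover have "\<forall>i\<ge>n. p' i = 0" "\<forall>i\<ge>n. p i = 0"
    using p' assms by (simp_all add: is_proj_def)
  ultimately show "p' = p"
    by (metis ext not_le)
qed (fact assms)

text \<open>One Gram--Schmidt step: adjoining column \<open>j\<close> adds its residual \<open>r\<close> as one more orthogonal
  direction.  If \<open>r\<close> vanishes below \<open>n\<close>, then \<open>t = 0\<close> because \<open>x / 0 = 0\<close>.\<close>

lemma is_proj_insert:
  assumes "finite J" and p: "is_proj n A J y p"
    and r_zero: "\<forall>i\<ge>n. r i = 0" and r_perp: "\<And>w. w \<in> colspace n A J \<Longrightarrow> ipn n r w = 0"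
    and r_col: "(\<lambda>i. col A j i - r i) \<in> colspace n A J"
  defines "t \<equiv> ipn n y r / ipn n r r"
  shows "is_proj n A (insert j J) y (\<lambda>i. p i + t * r i)"
proof -
  define e where "e = (\<lambda>i. (y i - p i) - t * r i)"
  have sub: "colspace n A J \<subseteq> colspace n A (insert j J)"
    using assms(1) by (intro colspace_mono) auto
  have r_in: "r \<in> colspace n A (insert j J)"
    using colspace_diff[OF col_in_colspace[of "insert j J" j A n] subsetD[OF sub r_col]] assms(1)
    by simp
  have e_perp_J: "ipn n e w = 0" if "w \<in> colspace n A J" for w
  proof -
    have "ipn n e w = ipn n y w - ipn n p w - t * ipn n r w"
      unfolding e_def by (simp only: ipn_diff_left ipn_scale_left)
    then show ?thesis
      using p r_perp that by (simp add: is_proj_def ipn_diff_left)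
  qed
  have e_perp_r: "ipn n e r = 0"
  proof (cases "ipn n r r = 0")
    case True
    then show ?thesis
      by (simp only: ipn_self_eq_0_iff) (simp add: ipn_def)
  next
    case False
    have "ipn n e r = ipn n y r - ipn n p r - t * ipn n r r"
      unfolding e_def by (simp only: ipn_diff_left ipn_scale_left)
    moreover have "ipn n p r = 0"
      using r_perp p by (simp add: is_proj_def ipn_commute)
    ultimately show ?thesis
      using False by (simp add: t_def)
  qed
  have "ipn n e (col A j) = ipn n e r + ipn n e (\<lambda>i. col A j i - r i)"
    by (simp add: ipn_add_right[symmetric])
  then have e_perp_col: "ipn n e (col A j) = 0"
    using e_perp_r e_perp_J[OF r_col] by simp
  have "p \<in> colspace n A (insert j J)"
    using sub p by (auto simp: is_proj_def)
  from colspace_lincomb[OF this r_in, of 1 t]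
  have "(\<lambda>i. p i + t * r i) \<in> colspace n A (insert j J)"
    by simp
  moreover have "ipn n e w = 0" if "w \<in> colspace n A (insert j J)" for w
    using assms(1) that e_perp_J e_perp_col by (rule ipn_colspace_insert_eq_0)
  ultimately show ?thesis
    using p r_zero by (simp add: is_proj_def e_def diff_diff_eq)
qed

lemma proj_exists:
  assumes "finite J"
  shows "\<exists>p. is_proj n A J y p"
  using assms
proof (induction J arbitrary: y rule: finite_induct)
  case empty
  show ?case
    by (intro exI[of _ "\<lambda>_. 0"]) (auto simp: is_proj_def colspace_def ipn_def)
next
  case (insert j J)
  obtain p where p: "is_proj n A J y p"
    using insert.IH by blast
  obtain pj where pj: "is_proj n A J (col A j) pj"
    using insert.IH by blast
  define r where "r i = (if i < n then col A j i - pj i else 0)" for i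
  have r_zero: "\<forall>i\<ge>n. r i = 0"
    by (simp add: r_def)
  have r_perp: "ipn n r w = 0" if "w \<in> colspace n A J" for w
  proof -
    have "ipn n r w = ipn n (\<lambda>i. col A j i - pj i) w"
      by (rule ipn_cong) (simp_all add: r_def)
    then show ?thesis
      using pj that by (simp add: is_proj_def)
  qed
  have r_col: "(\<lambda>i. col A j i - r i) \<in> colspace n A J"
  proof (rule colspace_cong)
    show "pj \<in> colspace n A J"
      using pj by (simp add: is_proj_def)
  qed (simp add: r_def)
  from is_proj_insert[OF insert.hyps(1) p r_zero r_perp r_col]
  show ?case
    by blast
qed

lemma
  assumes "finite J"
  shows proj_in_colspace: "proj n A J y \<in> colspace n A J"
    and proj_resid_orthogonal:
      "w \<in> colspace n A J \<Longrightarrow> ipn n (\<lambda>i. y i - proj n A J y i) w = 0"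
proof -
  obtain p where "is_proj n A J y p"
    using proj_exists[OF assms] ..
  then have "is_proj n A J y (proj n A J y)"
    by (simp add: proj_eqI)
  then show "proj n A J y \<in> colspace n A J"
    and "w \<in> colspace n A J \<Longrightarrow> ipn n (\<lambda>i. y i - proj n A J y i) w = 0"
    by (simp_all add: is_proj_def)
qed

section \<open>The Gram matrix and least squares\<close>

lemma gram_quadratic_form:
  fixes X :: "nat \<Rightarrow> nat \<Rightarrow> real"
  shows "(\<Sum>a<d. c a * (\<Sum>b<d. (\<Sum>i<n. X i a * X i b) * c b)) = (\<Sum>i<n. (\<Sum>j<d. c j * X i j)\<^sup>2)"
proof -
  have "(\<Sum>a<d. c a * (\<Sum>b<d. (\<Sum>i<n. X i a * X i b) * c b))
      = (\<Sum>a<d. \<Sum>b<d. \<Sum>i<n. c a * X i a * (c b * X i b))"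
    by (simp add: sum_distrib_left sum_distrib_right mult_ac)
  also have "\<dots> = (\<Sum>a<d. \<Sum>i<n. \<Sum>b<d. c a * X i a * (c b * X i b))"
    by (rule sum.cong[OF refl]) (rule sum.swap)
  also have "\<dots> = (\<Sum>i<n. \<Sum>a<d. \<Sum>b<d. c a * X i a * (c b * X i b))"
    by (rule sum.swap)
  also have "\<dots> = (\<Sum>i<n. (\<Sum>j<d. c j * X i j)\<^sup>2)"
    by (simp add: power2_eq_square sum_product)
  finally show ?thesis .
qed

lemma gram_invertible:
  fixes X :: "nat \<Rightarrow> nat \<Rightarrow> real"
  assumes "full_col_rank n d X"
  defines "G \<equiv> \<lambda>a b. \<Sum>i<n. X i a * X i b"
  obtains H where
    "\<And>i j. i < d \<Longrightarrow> j < d \<Longrightarrow> (\<Sum>l<d. H i l * G l j) = (if i = j then 1 else 0)"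
    "\<And>i j. i < d \<Longrightarrow> j < d \<Longrightarrow> (\<Sum>l<d. G i l * H l j) = (if i = j then 1 else 0)"
    "\<And>i j. d \<le> i \<or> d \<le> j \<Longrightarrow> H i j = 0"
proof -
  define M where "M = mat d d (\<lambda>(a, b). G a b)"
  have M: "M \<in> carrier_mat d d"
    by (simp add: M_def)
  have "det M \<noteq> 0"
  proof
    assume "det M = 0"
    then obtain v where v: "v \<in> carrier_vec d" "v \<noteq> 0\<^sub>v d" "M *\<^sub>v v = 0\<^sub>v d"
      using det_0_iff_vec_prod_zero[OF M] by auto
    define c where "c j = (if j < d then v $ j else 0)" for j
    have "(\<Sum>b<d. G a b * c b) = (M *\<^sub>v v) $ a" if "a < d" for a
      using that v(1)
      by (auto simp: M_def scalar_prod_def c_def atLeast0LessThan intro!: sum.cong)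
    then have "(\<Sum>i<n. (\<Sum>j<d. c j * X i j)\<^sup>2) = 0"
      using v(3) by (simp add: gram_quadratic_form[symmetric] G_def)
    then have "\<forall>i<n. (\<Sum>j<d. c j * X i j) = 0"
      by (subst (asm) sum_nonneg_eq_0_iff) auto
    with assms(1) have "\<forall>j<d. c j = 0"
      unfolding full_col_rank_def by blast
    then have "v = 0\<^sub>v d"
      using v(1) by (intro eq_vecI) (auto simp: c_def)
    with v(2) show False ..
  qed
  then obtain B where B: "B \<in> carrier_mat d d" "B * M = 1\<^sub>m d" "M * B = 1\<^sub>m d"
    using det_non_zero_imp_unit[OF M, of "()"] unfolding Units_def ring_mat_def by auto
  show ?thesis
  proof
    fix i j assume ij: "i < d" "j < d"
    show "(\<Sum>l<d. (if i < d \<and> l < d then B $$ (i, l) else 0) * G l j) = (if i = j then 1 else 0)"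
      using arg_cong[OF B(2), of "\<lambda>N. N $$ (i, j)"] ij B(1)
      by (auto simp: M_def scalar_prod_def atLeast0LessThan intro!: sum.cong)
    show "(\<Sum>l<d. G i l * (if l < d \<and> j < d then B $$ (l, j) else 0)) = (if i = j then 1 else 0)"
      using arg_cong[OF B(3), of "\<lambda>N. N $$ (i, j)"] ij B(1)
      by (auto simp: M_def scalar_prod_def atLeast0LessThan intro!: sum.cong)
  qed auto
qed

lemma matinv_eqI:
  assumes left: "\<And>i j. i < d \<Longrightarrow> j < d \<Longrightarrow> (\<Sum>l<d. H i l * G l j) = (if i = j then 1 else 0)"
    and right: "\<And>i j. i < d \<Longrightarrow> j < d \<Longrightarrow> (\<Sum>l<d. G i l * H l j) = (if i = j then 1 else 0)"
    and outside: "\<And>i j. d \<le> i \<or> d \<le> j \<Longrightarrow> H i j = 0"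
  shows "matinv d G = H"
  unfolding matinv_def
proof (rule the_equality)
  fix H' assume H': "(\<forall>i<d. \<forall>j<d. (\<Sum>l<d. H' i l * G l j) = (if i = j then 1 else 0)) \<and>
    (\<forall>i<d. \<forall>j<d. (\<Sum>l<d. G i l * H' l j) = (if i = j then 1 else 0)) \<and>
    (\<forall>i j. d \<le> i \<or> d \<le> j \<longrightarrow> H' i j = 0)"
  then have left': "\<And>i j. i < d \<Longrightarrow> j < d \<Longrightarrow> (\<Sum>l<d. H' i l * G l j) = (if i = j then 1 else 0)"
    and outside': "\<And>i j. d \<le> i \<or> d \<le> j \<Longrightarrow> H' i j = 0"
    by blast+
  have "H' i j = H i j" if ij: "i < d" "j < d" for i j
  proof -
    have "H' i j = (\<Sum>l<d. H' i l * (if l = j then 1 else 0))"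
      using ij by (simp add: if_distrib[where f = "\<lambda>x. _ * x"] cong: if_cong)
    also have "\<dots> = (\<Sum>l<d. H' i l * (\<Sum>p<d. G l p * H p j))"
      using ij by (intro sum.cong refl) (simp add: right)
    also have "\<dots> = (\<Sum>l<d. \<Sum>p<d. H' i l * G l p * H p j)"
      by (simp add: sum_distrib_left mult.assoc)
    also have "\<dots> = (\<Sum>p<d. \<Sum>l<d. H' i l * G l p * H p j)"
      by (rule sum.swap)
    also have "\<dots> = (\<Sum>p<d. (\<Sum>l<d. H' i l * G l p) * H p j)"
      by (simp only: sum_distrib_right)
    also have "\<dots> = (\<Sum>p<d. (if i = p then 1 else 0) * H p j)"
      using ij by (intro sum.cong refl) (simp add: left')
    also have "\<dots> = H i j"
      using ij by (simp add: if_distrib[where f = "\<lambda>x. x * _"] cong: if_cong)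
    finally show ?thesis .
  qed
  then show "H' = H"
    using outside outside' by (intro ext) (metis not_le)
qed (use assms in blast)

lemma gram_mult_matinv:
  fixes X :: "nat \<Rightarrow> nat \<Rightarrow> real"
  assumes "full_col_rank n d X" "i < d" "j < d"
  defines "G \<equiv> \<lambda>a b. \<Sum>i<n. X i a * X i b"
  shows "(\<Sum>l<d. G i l * matinv d G l j) = (if i = j then 1 else 0)"
proof -
  obtain H where H:
    "\<And>i j. i < d \<Longrightarrow> j < d \<Longrightarrow> (\<Sum>l<d. H i l * G l j) = (if i = j then 1 else 0)"
    "\<And>i j. i < d \<Longrightarrow> j < d \<Longrightarrow> (\<Sum>l<d. G i l * H l j) = (if i = j then 1 else 0)"
    "\<And>i j. d \<le> i \<or> d \<le> j \<Longrightarrow> H i j = 0"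
    using gram_invertible[OF assms(1)] unfolding G_def by blast
  then show ?thesis
    using assms(2,3) by (simp add: matinv_eqI[OF H])
qed

lemma ols_normal_equations:
  assumes "full_col_rank n d X" "l < d"
  shows "ipn n (col X l) (\<lambda>i. \<Sum>j<d. X i j * ols n d X z j) = ipn n (col X l) z"
proof -
  define G where "G = (\<lambda>a b. \<Sum>i<n. X i a * X i b)"
  define b where "b p = (\<Sum>i<n. X i p * z i)" for p
  have "ipn n (col X l) (\<lambda>i. \<Sum>j<d. X i j * ols n d X z j) = (\<Sum>j<d. G l j * ols n d X z j)"
    by (simp add: ipn_def Defs.col_def G_def sum_distrib_left sum_distrib_right mult_ac
        sum.swap[of _ "{..<n}"])
  also have "\<dots> = (\<Sum>j<d. \<Sum>p<d. G l j * matinv d G j p * b p)"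
    by (simp add: ols_def G_def[symmetric] b_def sum_distrib_left mult.assoc)
  also have "\<dots> = (\<Sum>p<d. \<Sum>j<d. G l j * matinv d G j p * b p)"
    by (rule sum.swap)
  also have "\<dots> = (\<Sum>p<d. (\<Sum>j<d. G l j * matinv d G j p) * b p)"
    by (simp only: sum_distrib_right)
  also have "\<dots> = (\<Sum>p<d. (if l = p then 1 else 0) * b p)"
    using gram_mult_matinv[OF assms(1,2)] by (intro sum.cong) (auto simp: G_def)
  also have "\<dots> = b l"
    using assms(2) by (simp add: if_distrib[where f = "\<lambda>x. x * _"] cong: if_cong)
  finally show ?thesis
    by (simp add: b_def ipn_def Defs.col_def)
qed

lemma parseval_colspace:
  assumes orth: "\<And>a b. a < m \<Longrightarrow> b < m \<Longrightarrow> ipn n (col V a) (col V b) = (if a = b then 1 else 0)"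
    and w: "w \<in> colspace n V {..<m}"
  shows "ipn n w w = (\<Sum>a<m. (ipn n (col V a) w)\<^sup>2)"
proof -
  obtain c where c: "\<forall>i<n. w i = (\<Sum>a<m. c a * V i a)"
    using w unfolding colspace_def by auto
  have w_eq: "ipn n x w = (\<Sum>a<m. c a * ipn n x (col V a))" for x
    using c by (simp add: ipn_sum_right[symmetric] cong: ipn_cong)
  have coeff: "ipn n (col V b) w = c b" if "b < m" for b
  proof -
    have "ipn n (col V b) w = (\<Sum>a<m. c a * (if b = a then 1 else 0))"
      using that orth by (simp add: w_eq)
    then show ?thesis
      using that by (simp add: if_distrib[where f = "\<lambda>x. _ * x"] cong: if_cong)
  qed
  have "ipn n w w = (\<Sum>a<m. c a * ipn n w (col V a))"
    by (rule w_eq)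
  also have "\<dots> = (\<Sum>a<m. (ipn n (col V a) w)\<^sup>2)"
    by (intro sum.cong) (simp_all add: ipn_commute[of n w] coeff power2_eq_square)
  finally show ?thesis .
qed

section \<open>Squared norms under Lebesgue measure\<close>

text \<open>The derivative of \<open>s \<mapsto> vol {x \<in> \<real>\<^sup>k. \<parallel>x\<parallel>\<^sup>2 \<le> s} = \<omega>\<^sub>k s\<^bsup>k/2\<^esup>\<close>.\<close>

definition sqnorm_density :: "nat \<Rightarrow> real \<Rightarrow> real" where
  "sqnorm_density k s =
     (if 0 < s then real k / 2 * unit_ball_vol (real k) * s powr (real k / 2 - 1) else 0)"

lemma sqnorm_density_nonneg: "0 \<le> sqnorm_density k s"
  unfolding sqnorm_density_def by (auto intro!: mult_nonneg_nonneg unit_ball_vol_nonneg)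

lemma sqnorm_density_borel_measurable: "sqnorm_density k \<in> borel_measurable borel"
  unfolding sqnorm_density_def by measurable

lemma sum_sq_borel_measurable:
  assumes "K \<subseteq> I"
  shows "(\<lambda>x. \<Sum>i\<in>K. (x i)\<^sup>2 :: real) \<in> borel_measurable (PiM I (\<lambda>_. lborel))"
proof (rule borel_measurable_sum)
  fix i assume "i \<in> K"
  then have "(\<lambda>x. x i :: real) \<in> borel_measurable (PiM I (\<lambda>_. lborel))"
    using assms measurable_component_singleton[of i I "\<lambda>_. lborel :: real measure"] by auto
  then show "(\<lambda>x. (x i)\<^sup>2 :: real) \<in> borel_measurable (PiM I (\<lambda>_. lborel))"
    by measurable
qed

lemma nrm_borel_measurable:
  assumes "K \<le> N"
  shows "nrm K \<in> borel_measurable (PiM {..<N} (\<lambda>_. lborel))"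
proof -
  have "(\<lambda>x. \<Sum>i\<in>{..<K}. (x i)\<^sup>2 :: real) \<in> borel_measurable (PiM {..<N} (\<lambda>_. lborel))"
    using assms by (intro sum_sq_borel_measurable) auto
  then show ?thesis
    unfolding nrm_eq_sqrt_sum_sq[abs_def] by measurable
qed

lemma emeasure_PiM_sum_sq_le:
  fixes t :: real
  assumes "finite I" "0 < t"
  shows "emeasure (PiM I (\<lambda>_. lborel)) {x \<in> space (PiM I (\<lambda>_. lborel)). (\<Sum>i\<in>I. (x i)\<^sup>2) \<le> t} =
         ennreal (unit_ball_vol (real (card I)) * t powr (real (card I) / 2))"
proof -
  have "{x \<in> space (PiM I (\<lambda>_. lborel)). (\<Sum>i\<in>I. (x i)\<^sup>2) \<le> t} =
        {f. sqrt (\<Sum>i\<in>I. (f i)\<^sup>2) \<le> sqrt t} \<inter> space (PiM I (\<lambda>_. lborel))"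
    by auto
  moreover have "sqrt t ^ card I = t powr (real (card I) / 2)"
    using assms(2) by (simp add: powr_half_sqrt[symmetric] powr_realpow[symmetric] powr_powr)
  ultimately show ?thesis
    using assms emeasure_cball_aux[of I "sqrt t"] by simp
qed

lemma emeasure_PiM_sum_sq_le_nonpos:
  fixes t :: real
  assumes "finite I" "I \<noteq> {}" "t \<le> 0"
  shows "emeasure (PiM I (\<lambda>_. lborel)) {x \<in> space (PiM I (\<lambda>_. lborel)). (\<Sum>i\<in>I. (x i)\<^sup>2) \<le> t} = 0"
proof -
  have "{x \<in> space (PiM I (\<lambda>_. lborel)). (\<Sum>i\<in>I. (x i)\<^sup>2) \<le> t} \<subseteq> PiE I (\<lambda>_. {0 :: real})"
  proof
    fix x assume x: "x \<in> {x \<in> space (PiM I (\<lambda>_. lborel)). (\<Sum>i\<in>I. (x i)\<^sup>2) \<le> t}"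
    then have "(\<Sum>i\<in>I. (x i)\<^sup>2) = 0"
      using assms(3) sum_nonneg[of I "\<lambda>i. (x i)\<^sup>2"] by auto
    with x show "x \<in> PiE I (\<lambda>_. {0 :: real})"
      using assms(1) by (auto simp: space_PiM PiE_iff sum_nonneg_eq_0_iff fun_eq_iff extensional_def)
  qed
  then have "emeasure (PiM I (\<lambda>_. lborel)) {x \<in> space (PiM I (\<lambda>_. lborel)). (\<Sum>i\<in>I. (x i)\<^sup>2) \<le> t}
      \<le> emeasure (PiM I (\<lambda>_. lborel)) (PiE I (\<lambda>_. {0 :: real}))"
    by (rule emeasure_mono) (rule sets_PiM_I_finite, use assms in auto)
  also have "\<dots> = (\<Prod>i\<in>I. emeasure lborel {0 :: real})"
  proof -
    interpret product_sigma_finite "\<lambda>_. lborel :: real measure"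
      by standard
    show ?thesis
      using assms by (intro emeasure_PiM) auto
  qed
  also have "\<dots> = 0"
    using assms by (simp add: card_gt_0_iff)
  finally show ?thesis
    by simp
qed

lemma emeasure_sqnorm_density_atMost:
  assumes "1 \<le> k"
  shows "emeasure (density lborel (sqnorm_density k)) {..t} =
    (if 0 < t then ennreal (unit_ball_vol (real k) * t powr (real k / 2)) else 0)"
proof -
  have "emeasure (density lborel (sqnorm_density k)) {..t} =
      (\<integral>\<^sup>+s. ennreal (sqnorm_density k s) * indicator {..t} s \<partial>lborel)"
    using sqnorm_density_borel_measurable by (intro emeasure_density) auto
  also have "\<dots> = (if 0 < t then ennreal (unit_ball_vol (real k) * t powr (real k / 2)) else 0)"
  proof (cases "0 < t")
    case True
    define a where "a = real k / 2"
    have a: "0 < a"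
      using assms by (simp add: a_def)
    have "(\<lambda>s. ennreal (sqnorm_density k s) * indicator {..t} s) =
        (\<lambda>s. ennreal (indicator {0..t} s * (a * unit_ball_vol (real k) * s powr (a - 1))))"
      by (auto simp: sqnorm_density_def a_def indicator_def)
    moreover have "((\<lambda>s. a * unit_ball_vol (real k) * s powr (a - 1)) has_integral
        (a * unit_ball_vol (real k) * (t powr (a - 1 + 1) / (a - 1 + 1)))) {0..t}"
      using a True by (intro has_integral_mult_right has_integral_powr_from_0) auto
    ultimately have "(\<integral>\<^sup>+s. ennreal (sqnorm_density k s) * indicator {..t} s \<partial>lborel) =
        ennreal (a * unit_ball_vol (real k) * (t powr (a - 1 + 1) / (a - 1 + 1)))"
      using a by (simp add: nn_integral_has_integral_lebesgue)
    then show ?thesis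
      using a True by (simp add: a_def)
  next
    case False
    then have "(\<lambda>s. ennreal (sqnorm_density k s) * indicator {..t} s) = (\<lambda>_. 0)"
      by (auto simp: sqnorm_density_def indicator_def)
    then show ?thesis
      using False by simp
  qed
  finally show ?thesis .
qed

text \<open>The two measures agree on all half-lines \<open>{..t}\<close>, which generate the Borel sets.\<close>

lemma distr_PiM_sum_sq:
  assumes "finite I" "card I = k" "1 \<le> k"
  shows "distr (PiM I (\<lambda>_. lborel)) borel (\<lambda>x. \<Sum>i\<in>I. (x i)\<^sup>2) = density lborel (sqnorm_density k)"
    (is "?D = ?S")
proof -
  have sum_sq: "(\<lambda>x. \<Sum>i\<in>I. (x i)\<^sup>2 :: real) \<in> borel_measurable (PiM I (\<lambda>_. lborel))"
    by (rule sum_sq_borel_measurable) simp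
  have D_atMost: "emeasure ?D {..t} =
      (if 0 < t then ennreal (unit_ball_vol (real k) * t powr (real k / 2)) else 0)" for t
  proof -
    have "emeasure ?D {..t} =
        emeasure (PiM I (\<lambda>_. lborel)) {x \<in> space (PiM I (\<lambda>_. lborel)). (\<Sum>i\<in>I. (x i)\<^sup>2) \<le> t}"
      by (subst emeasure_distr[OF sum_sq]) (auto intro: arg_cong[where f = "emeasure _"])
    moreover have "I \<noteq> {}"
      using assms by auto
    ultimately show ?thesis
      using assms emeasure_PiM_sum_sq_le[OF assms(1)] emeasure_PiM_sum_sq_le_nonpos[OF assms(1)]
      by (cases "0 < t") auto
  qed
  have sets_atMost: "sets (borel :: real measure) = sigma_sets UNIV (range atMost)"
    by (simp add: borel_eq_atMost sets_measure_of)
  show ?thesis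
  proof (rule measure_eqI_generator_eq[where \<Omega> = UNIV and E = "range atMost" and A = "\<lambda>i. {..real i}"])
    show "Int_stable (range atMost :: real set set)"
      by (auto simp: Int_stable_def intro!: image_eqI[where x = "min _ _"])
    show "\<And>X. X \<in> range atMost \<Longrightarrow> emeasure ?D X = emeasure ?S X"
      using D_atMost emeasure_sqnorm_density_atMost[OF assms(3)] by auto
    show "(\<Union>i. {..real i}) = UNIV"
      by (auto intro: real_arch_simple)
    show "\<And>i. emeasure ?D {..real i} \<noteq> \<infinity>"
      using D_atMost by simp
  qed (auto simp: sets_atMost)
qed

lemma nn_integral_PiM_sum_sq:
  assumes "finite I" "card I = k" "1 \<le> k" "h \<in> borel_measurable borel"
  shows "(\<integral>\<^sup>+x. h (\<Sum>i\<in>I. (x i)\<^sup>2) \<partial>PiM I (\<lambda>_. lborel)) =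
         (\<integral>\<^sup>+s. ennreal (sqnorm_density k s) * h s \<partial>lborel)"
proof -
  have "(\<integral>\<^sup>+x. h (\<Sum>i\<in>I. (x i)\<^sup>2) \<partial>PiM I (\<lambda>_. lborel)) =
      (\<integral>\<^sup>+s. h s \<partial>distr (PiM I (\<lambda>_. lborel)) borel (\<lambda>x. \<Sum>i\<in>I. (x i)\<^sup>2))"
    using assms(4) by (intro nn_integral_distr[symmetric] sum_sq_borel_measurable) auto
  also have "\<dots> = (\<integral>\<^sup>+s. ennreal (sqnorm_density k s) * h s \<partial>lborel)"
    using assms sqnorm_density_borel_measurable
    by (simp add: distr_PiM_sum_sq nn_integral_density)
  finally show ?thesis .
qed

lemma sum_sq_merge:
  assumes "I \<inter> J = {}" "finite I" "finite J"
  shows "(\<Sum>i\<in>I \<union> J. (merge I J (x, y) i)\<^sup>2) = (\<Sum>i\<in>I. (x i)\<^sup>2) + (\<Sum>j\<in>J. (y j)\<^sup>2)"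
proof -
  have "(\<Sum>i\<in>I \<union> J. (merge I J (x, y) i)\<^sup>2) =
      (\<Sum>i\<in>I. (merge I J (x, y) i)\<^sup>2) + (\<Sum>i\<in>J. (merge I J (x, y) i)\<^sup>2)"
    using assms by (intro sum.union_disjoint) auto
  also have "\<dots> = (\<Sum>i\<in>I. (x i)\<^sup>2) + (\<Sum>j\<in>J. (y j)\<^sup>2)"
    using assms(1) by (auto simp: merge_def intro!: sum.cong arg_cong2[where f = "(+)"])
  finally show ?thesis .
qed

lemma emeasure_unif_sphere:
  assumes "S \<in> sets (Leb m)"
  shows "emeasure (unif_sphere m) S =
    emeasure (Leb m) {x \<in> space (Leb m). nrm m x \<le> 1 \<and> restrict (\<lambda>i. x i / nrm m x) {..<m} \<in> S}
      / ennreal (unit_ball_vol (real m))"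
proof -
  define Ball where "Ball = {x \<in> space (Leb m). nrm m x \<le> 1}"
  define normalize where "normalize = (\<lambda>x::nat \<Rightarrow> real. restrict (\<lambda>i. x i / nrm m x) {..<m})"
  have nrm_meas: "nrm m \<in> borel_measurable (Leb m)"
    unfolding Leb_def by (rule nrm_borel_measurable) simp
  have Ball: "Ball \<in> sets (Leb m)"
    unfolding Ball_def using nrm_meas by measurable
  have normalize: "normalize \<in> Leb m \<rightarrow>\<^sub>M Leb m"
    unfolding normalize_def
  proof (subst (2) Leb_def, rule measurable_restrict)
    fix i assume "i \<in> {..<m}"
    then have "(\<lambda>x. x i) \<in> borel_measurable (Leb m)"
      unfolding Leb_def using measurable_component_singleton[of i "{..<m}" "\<lambda>_. lborel"] by simp
    then show "(\<lambda>x. x i / nrm m x) \<in> Leb m \<rightarrow>\<^sub>M lborel"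
      using nrm_meas by simp
  qed
  have "emeasure (unif_sphere m) S = emeasure (uniform_measure (Leb m) Ball) (normalize -` S \<inter> space (Leb m))"
    unfolding unif_sphere_def Ball_def[symmetric] normalize_def[symmetric]
    using normalize assms by (subst emeasure_distr) (simp_all add: uniform_measure_def)
  also have "\<dots> = emeasure (Leb m) (Ball \<inter> (normalize -` S \<inter> space (Leb m))) / emeasure (Leb m) Ball"
    using Ball normalize assms by (intro emeasure_uniform_measure) (auto intro: measurable_sets)
  also have "Ball \<inter> (normalize -` S \<inter> space (Leb m)) =
      {x \<in> space (Leb m). nrm m x \<le> 1 \<and> restrict (\<lambda>i. x i / nrm m x) {..<m} \<in> S}"
    by (auto simp: Ball_def normalize_def)
  also have "emeasure (Leb m) Ball = ennreal (unit_ball_vol (real m))"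
    using emeasure_PiM_sum_sq_le[of "{..<m}" 1]
    by (simp add: Ball_def Leb_def nrm_eq_sqrt_sum_sq)
  finally show ?thesis .
qed

section \<open>Two descriptions of the upper tail of \<open>Beta(k/2, q/2)\<close>\<close>

locale beta_tail =
  fixes k q :: nat and b :: real
  assumes k_pos: "1 \<le> k" and q_pos: "1 \<le> q" and b_pos: "0 < b" and b_less_1: "b < 1"
begin

definition \<alpha> :: real where "\<alpha> = real k / 2"
definition \<beta> :: real where "\<beta> = real q / 2"

text \<open>\<open>upper_tail\<close> is \<open>\<integral>\<^sub>b\<^sup>1 u\<^bsup>\<alpha>-1\<^esup>(1-u)\<^bsup>\<beta>-1\<^esup> du / B(\<alpha>,\<beta>)\<close> after one integration by parts
  (see \<open>tail_boundary_has_derivative\<close>), which keeps all integrands continuous on \<open>[b,1]\<close>.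
  \<open>tail_const\<close> equals \<open>(\<alpha>+\<beta>)/(\<beta> B(\<alpha>,\<beta>))\<close>, written with ball volumes as it arises on the sphere.\<close>

definition beta_kernel :: "real \<Rightarrow> real"
  where "beta_kernel u = (1 - u) powr (\<beta> - 1) * u powr (\<alpha> - 1)"
definition tail_integrand :: "real \<Rightarrow> real"
  where "tail_integrand u = (1 - u) powr \<beta> * u powr (\<alpha> - 1)"
definition tail_boundary :: "real \<Rightarrow> real"
  where "tail_boundary u = (1 - u) powr \<beta> * u powr \<alpha> / (\<alpha> + \<beta>)"
definition tail_const :: real
  where "tail_const = \<alpha> * unit_ball_vol (real k) * unit_ball_vol (real q) / unit_ball_vol (real (k + q))"
definition upper_tail :: real
  where "upper_tail = tail_const * (tail_boundary b + integral {b..1} tail_integrand)"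

lemma \<alpha>_pos: "0 < \<alpha>" and \<beta>_pos: "0 < \<beta>"
  using k_pos q_pos by (auto simp: \<alpha>_def \<beta>_def)

lemma tail_const_pos: "0 < tail_const"
  unfolding tail_const_def using \<alpha>_pos by (intro divide_pos_pos mult_pos_pos unit_ball_vol_pos) auto

lemma tail_const_eq_Beta: "tail_const * \<beta> / (\<alpha> + \<beta>) = 1 / Beta \<alpha> \<beta>"
proof -
  have ball_vol: "unit_ball_vol (2 * x) = pi powr x / (x * Gamma x)" if "0 < x" for x :: real
    using that by (simp add: unit_ball_vol_def Gamma_plus1[of x] nonpos_Ints_def)
  have "real k = 2 * \<alpha>" "real q = 2 * \<beta>" "real (k + q) = 2 * (\<alpha> + \<beta>)"
    by (simp_all add: \<alpha>_def \<beta>_def)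
  then have tail_const: "tail_const =
      \<alpha> * (pi powr \<alpha> / (\<alpha> * Gamma \<alpha>)) * (pi powr \<beta> / (\<beta> * Gamma \<beta>))
        / (pi powr (\<alpha> + \<beta>) / ((\<alpha> + \<beta>) * Gamma (\<alpha> + \<beta>)))"
    unfolding tail_const_def using \<alpha>_pos \<beta>_pos by (simp only: ball_vol add_pos_pos)
  have cancel: "a * (p / (a * g)) * (p' / (a' * g')) / (p * p' / (s * h)) * a' / s = 1 / (g * g' / h)"
    if "0 < a" "0 < a'" "0 < s" "0 < p" "0 < p'" "0 < g" "0 < g'" "0 < h" for a a' s p p' g g' h :: real
    using that by (simp add: field_simps)
  show ?thesis
    unfolding tail_const Beta_def powr_add using \<alpha>_pos \<beta>_pos by (intro cancel) auto
qed

lemma tail_integrand_continuous_on: "0 < c \<Longrightarrow> continuous_on {c..1} tail_integrand"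
  unfolding tail_integrand_def using \<beta>_pos
  by (intro continuous_on_mult continuous_on_powr' continuous_intros) auto

lemma tail_boundary_continuous_on: "0 < c \<Longrightarrow> continuous_on {c..1} tail_boundary"
  unfolding tail_boundary_def using \<alpha>_pos \<beta>_pos
  by (intro continuous_on_divide continuous_on_mult continuous_on_powr' continuous_intros) auto

lemma tail_integrand_nonneg: "0 \<le> tail_integrand u"
  by (simp add: tail_integrand_def)

lemma integral_tail_integrand_nonneg: "0 \<le> integral {b..1} tail_integrand"
  using integrable_continuous_real[OF tail_integrand_continuous_on[OF b_pos]]
  by (rule integral_nonneg) (simp add: tail_integrand_nonneg)

lemma upper_tail_nonneg: "0 \<le> upper_tail"
  unfolding upper_tail_def tail_boundary_def
  using tail_const_pos integral_tail_integrand_nonneg \<alpha>_pos \<beta>_pos by simp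

lemma tail_boundary_has_derivative:
  assumes "0 < u" "u < 1"
  shows "(tail_boundary has_real_derivative tail_integrand u - \<beta> / (\<alpha> + \<beta>) * beta_kernel u) (at u)"
proof -
  have "(tail_boundary has_real_derivative
      (- (\<beta> * (1 - u) powr (\<beta> - 1)) * u powr \<alpha> + (1 - u) powr \<beta> * (\<alpha> * u powr (\<alpha> - 1))) / (\<alpha> + \<beta>)) (at u)"
    unfolding tail_boundary_def using assms \<alpha>_pos \<beta>_pos by (auto intro!: derivative_eq_intros)
  moreover
  have "(- (\<beta> * (1 - u) powr (\<beta> - 1)) * u powr \<alpha> + (1 - u) powr \<beta> * (\<alpha> * u powr (\<alpha> - 1))) / (\<alpha> + \<beta>)
      = tail_integrand u - \<beta> / (\<alpha> + \<beta>) * beta_kernel u"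
  proof -
    define P where "P = (1 - u) powr (\<beta> - 1)"
    define R where "R = u powr (\<alpha> - 1)"
    have P: "(1 - u) powr \<beta> = (1 - u) * P" and R: "u powr \<alpha> = u * R"
      using assms by (simp_all add: P_def R_def powr_diff)
    show ?thesis
      unfolding tail_integrand_def beta_kernel_def P R P_def[symmetric] R_def[symmetric]
      using \<alpha>_pos \<beta>_pos by (simp add: field_simps)
  qed
  ultimately show ?thesis
    by simp
qed

text \<open>If \<open>x\<close> has law \<open>F\<^sub>k\<^sub>,\<^sub>q\<close>, then \<open>F_to_beta x\<close> has law \<open>Beta(\<alpha>,\<beta>)\<close>.\<close>

definition F_to_beta :: "real \<Rightarrow> real" where "F_to_beta x = real k * x / (real q + real k * x)"
definition F_threshold :: real where "F_threshold = real q / real k * (b / (1 - b))"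

lemma F_threshold_pos: "0 < F_threshold"
  unfolding F_threshold_def using k_pos q_pos b_pos b_less_1 by simp

lemma F_to_beta_F_threshold: "F_to_beta F_threshold = b"
  unfolding F_to_beta_def F_threshold_def using k_pos q_pos b_pos b_less_1 by (simp add: field_simps)

lemma F_to_beta_bounds:
  assumes "F_threshold \<le> x"
  shows "b \<le> F_to_beta x" "F_to_beta x < 1"
proof -
  have D: "0 < real q + real k * x"
    using F_threshold_pos assms q_pos by (simp add: add_pos_nonneg)
  have "b * real q = (1 - b) * real k * F_threshold"
    unfolding F_threshold_def using k_pos b_less_1 by (simp add: field_simps)
  also have "\<dots> \<le> (1 - b) * real k * x"
    using assms b_less_1 by (intro mult_left_mono) auto
  finally show "b \<le> F_to_beta x"
    unfolding F_to_beta_def using D by (simp add: field_simps)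
  show "F_to_beta x < 1"
    unfolding F_to_beta_def using D q_pos by (simp add: field_simps)
qed

lemma F_to_beta_has_derivative:
  assumes "0 < x"
  shows "(F_to_beta has_real_derivative real k * real q / (real q + real k * x)\<^sup>2) (at x)"
proof -
  have D: "0 < real q + real k * x"
    using assms q_pos by (simp add: add_pos_nonneg)
  show ?thesis
    unfolding F_to_beta_def using D
    by (auto intro!: derivative_eq_intros simp: power2_eq_square field_simps)
qed

lemma F_to_beta_tendsto: "(F_to_beta \<longlongrightarrow> 1) at_top"
proof -
  have "((\<lambda>x. real q / (real q + real k * x)) \<longlongrightarrow> 0) at_top"
  proof (rule tendsto_divide_0[OF tendsto_const])
    show "filterlim (\<lambda>x. real q + real k * x) at_infinity at_top"
      using k_pos
      by (intro filterlim_at_top_imp_at_infinity filterlim_tendsto_add_at_top[OF tendsto_const]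
          filterlim_tendsto_pos_mult_at_top[OF tendsto_const _ filterlim_ident]) auto
  qed
  then have "((\<lambda>x. 1 - real q / (real q + real k * x)) \<longlongrightarrow> 1) at_top"
    by (auto intro: tendsto_eq_intros)
  moreover have "\<forall>\<^sub>F x in at_top. 1 - real q / (real q + real k * x) = F_to_beta x"
    using eventually_gt_at_top[of 0]
  proof eventually_elim
    case (elim x)
    then have "0 < real q + real k * x"
      using q_pos by (simp add: add_pos_nonneg)
    then show ?case
      by (simp add: F_to_beta_def field_simps)
  qed
  ultimately show ?thesis
    by (rule Lim_transform_eventually)
qed

lemma F_density_eq_beta_kernel:
  assumes x: "0 < x"
  shows "F_density k q x =
    tail_const * (\<beta> / (\<alpha> + \<beta>) * beta_kernel (F_to_beta x)) * (real k * real q / (real q + real k * x)\<^sup>2)"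
proof -
  define D where "D = real q + real k * x"
  have D: "0 < D"
    using x q_pos by (simp add: D_def add_pos_nonneg)
  have kq: "0 < real k" "0 < real q"
    using k_pos q_pos by auto
  have u: "F_to_beta x = real k * x / D" and u2: "1 - real k * x / D = real q / D"
    using D by (simp_all add: F_to_beta_def D_def field_simps)
  have A1: "(real q / D) powr (\<beta> - 1) = (real q powr \<beta> / real q) / (D powr \<beta> / D)"
    using D kq by (simp add: powr_divide powr_diff)
  have A2: "(real k * x / D) powr (\<alpha> - 1) = (real k powr \<alpha> / real k) * (x powr \<alpha> / x) / (D powr \<alpha> / D)"
    using D kq x by (simp add: powr_divide powr_diff powr_mult)
  have A3: "(real k / real q) powr \<alpha> = real k powr \<alpha> / real q powr \<alpha>"
    using kq by (simp add: powr_divide)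
  have A4: "(1 + real k * x / real q) powr (- (\<alpha> + \<beta>)) = (real q powr \<alpha> * real q powr \<beta>) / (D powr \<alpha> * D powr \<beta>)"
  proof -
    have "1 + real k * x / real q = D / real q"
      using kq by (simp add: D_def field_simps)
    then have "(1 + real k * x / real q) powr (- (\<alpha> + \<beta>)) = inverse ((D / real q) powr (\<alpha> + \<beta>))"
      by (simp only: powr_minus)
    also have "\<dots> = (real q powr \<alpha> * real q powr \<beta>) / (D powr \<alpha> * D powr \<beta>)"
      using D kq by (simp add: powr_divide powr_add field_simps)
    finally show ?thesis .
  qed
  have A5: "x powr (\<alpha> - 1) = x powr \<alpha> / x"
    using x by (simp add: powr_diff)
  have e: "real k / 2 = \<alpha>" "real q / 2 = \<beta>" "- (real k + real q) / 2 = - (\<alpha> + \<beta>)"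
    by (simp_all add: \<alpha>_def \<beta>_def field_simps)
  have pos: "0 < real k powr \<alpha>" "0 < real q powr \<alpha>" "0 < real q powr \<beta>" "0 < D powr \<alpha>" "0 < D powr \<beta>"
    "0 < x powr \<alpha>" "0 < Beta \<alpha> \<beta>"
    using kq D x \<alpha>_pos \<beta>_pos by (auto simp: Beta_def)
  have scaled_kernel: "tail_const * (\<beta> / (\<alpha> + \<beta>) * beta_kernel (F_to_beta x))
      = 1 / Beta \<alpha> \<beta> * beta_kernel (F_to_beta x)"
    unfolding tail_const_eq_Beta[symmetric] by simp
  show ?thesis
    unfolding scaled_kernel unfolding F_density_def e beta_kernel_def u u2 A1 A2 A3 A4 A5 D_def[symmetric]
    using x pos kq D
    by (simp add: field_simps power2_eq_square)
qed

lemma F_density_nonneg: "0 \<le> F_density k q x"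
  unfolding F_density_def using k_pos q_pos by (simp add: Beta_def)

lemma F_density_borel_measurable: "F_density k q \<in> borel_measurable borel"
  unfolding F_density_def by measurable

lemma integral_tail_integrand_has_derivative:
  assumes "0 < c" "c < u" "u < 1"
  shows "((\<lambda>v. integral {c..v} tail_integrand) has_real_derivative tail_integrand u) (at u)"
proof -
  have "((\<lambda>v. integral {c..v} tail_integrand) has_vector_derivative tail_integrand u) (at u within {c..1})"
    using assms by (intro integral_has_vector_derivative tail_integrand_continuous_on) auto
  then show ?thesis
    using assms by (simp add: at_within_Icc_at has_real_derivative_iff_has_vector_derivative)
qed

text \<open>An antiderivative of the \<open>F\<close> density on \<open>[F_threshold, \<infinity>)\<close>; the base point \<open>b/2\<close> of the
  indefinite integral could be any point of \<open>(0, b)\<close>.\<close>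

definition F_primitive :: "real \<Rightarrow> real" where
  "F_primitive x =
     tail_const * (integral {b/2..F_to_beta x} tail_integrand - tail_boundary (F_to_beta x))"

lemma F_primitive_has_derivative:
  assumes "F_threshold \<le> x"
  shows "(F_primitive has_real_derivative F_density k q x) (at x)"
proof -
  have x: "0 < x"
    using F_threshold_pos assms by simp
  have u: "b / 2 < F_to_beta x" "F_to_beta x < 1"
    using F_to_beta_bounds[OF assms] b_pos by auto
  have "((\<lambda>u. integral {b/2..u} tail_integrand - tail_boundary u) has_real_derivative
      \<beta> / (\<alpha> + \<beta>) * beta_kernel (F_to_beta x)) (at (F_to_beta x))"
    using DERIV_diff[OF integral_tail_integrand_has_derivative[OF _ u] tail_boundary_has_derivative] u b_pos
    by simp
  from DERIV_cmult[OF DERIV_chain2[OF this F_to_beta_has_derivative[OF x]], of tail_const]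
  show ?thesis
    unfolding F_primitive_def[abs_def] F_density_eq_beta_kernel[OF x] by (simp add: mult.assoc)
qed

lemma F_primitive_tendsto: "(F_primitive \<longlongrightarrow> tail_const * integral {b/2..1} tail_integrand) at_top"
proof -
  have integrable: "tail_integrand integrable_on {b/2..1}"
    using tail_integrand_continuous_on b_pos by (intro integrable_continuous_real) auto
  have in_domain: "\<forall>\<^sub>F x in at_top. F_to_beta x \<in> {b/2..1}"
    using eventually_ge_at_top[of F_threshold]
    by eventually_elim (use F_to_beta_bounds b_pos in fastforce)
  have "(F_primitive \<longlongrightarrow> tail_const * (integral {b/2..1} tail_integrand - tail_boundary 1)) at_top"
    unfolding F_primitive_def[abs_def] using b_pos b_less_1
    by (intro tendsto_intros
        continuous_on_tendsto_compose[OF indefinite_integral_continuous_1[OF integrable]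
          F_to_beta_tendsto _ in_domain]
        continuous_on_tendsto_compose[OF tail_boundary_continuous_on F_to_beta_tendsto _ in_domain])
       auto
  then show ?thesis
    by (simp add: tail_boundary_def)
qed

theorem measure_F_dist_tail: "measure (F_dist k q) {F_threshold..} = upper_tail"
proof -
  have "integral {b/2..1} tail_integrand = integral {b/2..b} tail_integrand + integral {b..1} tail_integrand"
    using b_pos b_less_1 tail_integrand_continuous_on
    by (intro Henstock_Kurzweil_Integration.integral_combine[symmetric] integrable_continuous_real) auto
  then have "tail_const * integral {b/2..1} tail_integrand - F_primitive F_threshold = upper_tail"
    by (simp add: F_primitive_def F_to_beta_F_threshold upper_tail_def algebra_simps)
  moreover have "emeasure (F_dist k q) {F_threshold..} =
      (\<integral>\<^sup>+x. ennreal (F_density k q x) * indicator {F_threshold..} x \<partial>lborel)"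
    unfolding F_dist_def using F_density_borel_measurable by (intro emeasure_density) auto
  moreover have "\<dots> = tail_const * integral {b/2..1} tail_integrand - F_primitive F_threshold"
    using F_density_borel_measurable F_primitive_has_derivative F_density_nonneg F_primitive_tendsto
    by (rule nn_integral_FTC_atLeast)
  ultimately show ?thesis
    using upper_tail_nonneg by (simp add: measure_def)
qed

text \<open>Write \<open>x \<in> \<real>\<^bsup>k+q\<^esup>\<close> as \<open>(y, w)\<close> with \<open>y \<in> \<real>\<^sup>k\<close>.  Given \<open>s = \<parallel>y\<parallel>\<^sup>2 \<in> (0,1)\<close>, the conditions
  \<open>\<parallel>x\<parallel> \<le> 1\<close> and \<open>b \<parallel>x\<parallel>\<^sup>2 \<le> \<parallel>y\<parallel>\<^sup>2\<close> cut out the ball \<open>\<parallel>w\<parallel>\<^sup>2 \<le> min (1 - s) (odds s)\<close>, whose volume is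
  \<open>slice_volume s\<close>.\<close>

definition odds :: real where "odds = (1 - b) / b"

definition slice_volume :: "real \<Rightarrow> real" where
  "slice_volume s =
     (if 0 < s \<and> s < 1 then unit_ball_vol (real q) * (min (1 - s) (odds * s)) powr \<beta> else 0)"

definition cap_region :: "(nat \<Rightarrow> real) set" where
  "cap_region = {x \<in> space (PiM {..<k + q} (\<lambda>_. lborel)).
     (\<Sum>i<k + q. (x i)\<^sup>2) \<le> 1 \<and> b * (\<Sum>i<k + q. (x i)\<^sup>2) \<le> (\<Sum>i<k. (x i)\<^sup>2) \<and> 0 < (\<Sum>i<k + q. (x i)\<^sup>2)}"

lemma odds_pos: "0 < odds"
  unfolding odds_def using b_pos b_less_1 by simp

lemma slice_volume_nonneg: "0 \<le> slice_volume s"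
  unfolding slice_volume_def by (auto intro!: mult_nonneg_nonneg unit_ball_vol_nonneg)

lemma slice_volume_borel_measurable: "slice_volume \<in> borel_measurable borel"
  unfolding slice_volume_def by measurable

lemma emeasure_slice:
  fixes s :: real
  assumes "0 \<le> s"
  defines "J \<equiv> {k..<k + q}"
  shows "emeasure (PiM J (\<lambda>_. lborel)) {w \<in> space (PiM J (\<lambda>_. lborel)).
      s + (\<Sum>j\<in>J. (w j)\<^sup>2) \<le> 1 \<and> b * (s + (\<Sum>j\<in>J. (w j)\<^sup>2)) \<le> s \<and> 0 < s + (\<Sum>j\<in>J. (w j)\<^sup>2)}
    = ennreal (slice_volume s)"
proof -
  have J: "finite J" "card J = q" "J \<noteq> {}"
    using q_pos by (auto simp: J_def)
  define M where "M = PiM J (\<lambda>_. lborel :: real measure)"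
  define T where "T w = (\<Sum>j\<in>J. (w j)\<^sup>2)" for w :: "nat \<Rightarrow> real"
  have T_nonneg: "0 \<le> T w" for w
    unfolding T_def by (simp add: sum_nonneg)
  let ?F = "{w \<in> space M. s + T w \<le> 1 \<and> b * (s + T w) \<le> s \<and> 0 < s + T w}"
  have "emeasure M ?F = ennreal (slice_volume s)"
  proof (cases "0 < s \<and> s < 1")
    case True
    define r where "r = min (1 - s) (odds * s)"
    have r: "0 < r"
      using True odds_pos by (simp add: r_def)
    have "?F = {w \<in> space M. T w \<le> r}"
    proof (intro Collect_cong conj_cong refl)
      fix w
      have "b * (s + T w) \<le> s \<longleftrightarrow> T w \<le> odds * s"
        unfolding odds_def using b_pos b_less_1 by (simp add: field_simps)
      then show "(s + T w \<le> 1 \<and> b * (s + T w) \<le> s \<and> 0 < s + T w) = (T w \<le> r)"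
        using True T_nonneg[of w] by (auto simp: r_def)
    qed
    also have "emeasure M \<dots> = ennreal (unit_ball_vol (real q) * r powr (real q / 2))"
      unfolding M_def T_def using emeasure_PiM_sum_sq_le[OF J(1) r] J(2) by simp
    finally show ?thesis
      using True by (simp add: slice_volume_def r_def \<beta>_def)
  next
    case False
    then have "s = 0 \<or> 1 \<le> s"
      using assms(1) by auto
    then have "?F \<subseteq> {w \<in> space M. T w \<le> 0}"
      using b_pos T_nonneg by (auto simp: zero_less_mult_iff mult_le_0_iff)
    then have "emeasure M ?F \<le> emeasure M {w \<in> space M. T w \<le> 0}"
      by (rule emeasure_mono) (simp add: M_def T_def)
    also have "\<dots> = 0"
      unfolding M_def T_def by (rule emeasure_PiM_sum_sq_le_nonpos[OF J(1) J(3)]) simp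
    moreover have "slice_volume s = 0"
      unfolding slice_volume_def using False by (rule if_not_P)
    ultimately show ?thesis
      by simp
  qed
  then show ?thesis
    by (simp add: M_def T_def)
qed

lemma cap_region_sets: "cap_region \<in> sets (PiM {..<k + q} (\<lambda>_. lborel))"
proof -
  have "(\<lambda>x. \<Sum>i<k + q. (x i)\<^sup>2 :: real) \<in> borel_measurable (PiM {..<k + q} (\<lambda>_. lborel))"
    and "(\<lambda>x. \<Sum>i<k. (x i)\<^sup>2 :: real) \<in> borel_measurable (PiM {..<k + q} (\<lambda>_. lborel))"
    by (rule sum_sq_borel_measurable, simp)+
  then show ?thesis
    unfolding cap_region_def
    by (intro sets.sets_Collect_conj borel_measurable_le borel_measurable_less
        borel_measurable_times borel_measurable_const)
qed

text \<open>Fubini over the split \<open>\<real>\<^bsup>k+q\<^esup> = \<real>\<^sup>k \<times> \<real>\<^sup>q\<close>, then polar integration in \<open>\<real>\<^sup>k\<close>.\<close>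

lemma emeasure_cap_region:
  "emeasure (PiM {..<k + q} (\<lambda>_. lborel)) cap_region =
    (\<integral>\<^sup>+s. ennreal (sqnorm_density k s) * ennreal (slice_volume s) \<partial>lborel)"
proof -
  interpret product_sigma_finite "\<lambda>_. lborel :: real measure"
    by standard
  define I where "I = {..<k}"
  define J where "J = {k..<k + q}"
  have IJ: "I \<inter> J = {}" "finite I" "finite J" "I \<union> J = {..<k + q}"
    by (auto simp: I_def J_def)
  have "emeasure (PiM {..<k + q} (\<lambda>_. lborel)) cap_region =
      (\<integral>\<^sup>+x. indicator cap_region x \<partial>PiM (I \<union> J) (\<lambda>_. lborel))"
    using cap_region_sets by (simp add: IJ(4))
  also have "\<dots> = (\<integral>\<^sup>+x. (\<integral>\<^sup>+w. indicator cap_region (merge I J (x, w)) \<partial>PiM J (\<lambda>_. lborel))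
      \<partial>PiM I (\<lambda>_. lborel))"
    using cap_region_sets IJ by (intro product_nn_integral_fold) simp_all
  also have "\<dots> = (\<integral>\<^sup>+x. ennreal (slice_volume (\<Sum>i\<in>I. (x i)\<^sup>2)) \<partial>PiM I (\<lambda>_. lborel))"
  proof (rule nn_integral_cong)
    fix x assume x: "x \<in> space (PiM I (\<lambda>_. lborel :: real measure))"
    define s where "s = (\<Sum>i\<in>I. (x i)\<^sup>2)"
    let ?F = "{w \<in> space (PiM J (\<lambda>_. lborel :: real measure)). s + (\<Sum>j\<in>J. (w j)\<^sup>2) \<le> 1 \<and>
       b * (s + (\<Sum>j\<in>J. (w j)\<^sup>2)) \<le> s \<and> 0 < s + (\<Sum>j\<in>J. (w j)\<^sup>2)}"
    have "(\<integral>\<^sup>+w. indicator cap_region (merge I J (x, w)) \<partial>PiM J (\<lambda>_. lborel)) =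
        (\<integral>\<^sup>+w. indicator ?F w \<partial>PiM J (\<lambda>_. lborel))"
    proof (rule nn_integral_cong)
      fix w assume w: "w \<in> space (PiM J (\<lambda>_. lborel :: real measure))"
      have "merge I J (x, w) \<in> space (PiM {..<k + q} (\<lambda>_. lborel :: real measure))"
        using x w IJ(1) unfolding IJ(4)[symmetric] by (simp add: space_PiM PiE_iff)
      moreover have "(\<Sum>i<k + q. (merge I J (x, w) i)\<^sup>2) = s + (\<Sum>j\<in>J. (w j)\<^sup>2)"
        unfolding IJ(4)[symmetric] s_def by (rule sum_sq_merge[OF IJ(1-3)])
      moreover have "(\<Sum>i<k. (merge I J (x, w) i)\<^sup>2) = s"
        unfolding s_def I_def[symmetric] using IJ(1) by (intro sum.cong) (auto simp: merge_def)
      ultimately show "indicator cap_region (merge I J (x, w)) = (indicator ?F w :: ennreal)"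
        using w by (simp add: cap_region_def indicator_def)
    qed
    also have "\<dots> = emeasure (PiM J (\<lambda>_. lborel)) ?F"
      by (rule nn_integral_indicator) measurable
    also have "\<dots> = ennreal (slice_volume s)"
      unfolding J_def by (rule emeasure_slice) (simp add: s_def sum_nonneg)
    finally show "(\<integral>\<^sup>+w. indicator cap_region (merge I J (x, w)) \<partial>PiM J (\<lambda>_. lborel)) =
        ennreal (slice_volume (\<Sum>i\<in>I. (x i)\<^sup>2))"
      by (simp add: s_def)
  qed
  also have "\<dots> = (\<integral>\<^sup>+s. ennreal (sqnorm_density k s) * ennreal (slice_volume s) \<partial>lborel)"
    using k_pos slice_volume_borel_measurable by (intro nn_integral_PiM_sum_sq) (auto simp: I_def)
  finally show ?thesis .
qed

definition cap_const :: real where "cap_const = \<alpha> * unit_ball_vol (real k) * unit_ball_vol (real q)"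

lemma cap_const_nonneg: "0 \<le> cap_const"
  unfolding cap_const_def using \<alpha>_pos by (auto intro!: mult_nonneg_nonneg unit_ball_vol_nonneg)

lemma sqnorm_density_mult_slice_volume:
  "sqnorm_density k s * slice_volume s =
    indicator {0..b} s * (cap_const * odds powr \<beta> * s powr (\<alpha> + \<beta> - 1)) +
    indicator {b<..1} s * (cap_const * tail_integrand s)"
proof -
  have density: "sqnorm_density k s = (if 0 < s then \<alpha> * unit_ball_vol (real k) * s powr (\<alpha> - 1) else 0)"
    by (simp add: sqnorm_density_def \<alpha>_def)
  consider "s \<le> 0" | "0 < s" "s \<le> b" | "b < s" "s < 1" | "1 \<le> s"
    by linarith
  then show ?thesis
  proof cases
    case 1
    then show ?thesis
      using b_pos by (cases "s = 0") (auto simp: sqnorm_density_def indicator_def)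
  next
    case 2
    then have "odds * s \<le> 1 - s" "s < 1"
      unfolding odds_def using b_pos b_less_1 by (simp_all add: field_simps)
    then have "sqnorm_density k s * slice_volume s =
        cap_const * odds powr \<beta> * (s powr (\<alpha> - 1) * s powr \<beta>)"
      using 2 odds_pos by (simp add: density slice_volume_def powr_mult cap_const_def mult_ac)
    also have "s powr (\<alpha> - 1) * s powr \<beta> = s powr (\<alpha> + \<beta> - 1)"
      by (simp add: powr_add[symmetric] algebra_simps)
    finally show ?thesis
      using 2 by (simp add: indicator_def)
  next
    case 3
    then have "1 - s \<le> odds * s"
      unfolding odds_def using b_pos by (simp add: field_simps)
    then have "sqnorm_density k s * slice_volume s = cap_const * tail_integrand s"
      using 3 b_pos by (simp add: density slice_volume_def tail_integrand_def cap_const_def mult_ac)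
    then show ?thesis
      using 3 by (simp add: indicator_def)
  next
    case 4
    then show ?thesis
      using b_less_1 by (cases "s = 1") (simp_all add: slice_volume_def indicator_def tail_integrand_def)
  qed
qed

lemma nn_integral_cap_lower:
  "(\<integral>\<^sup>+s. ennreal (indicator {0..b} s * (cap_const * odds powr \<beta> * s powr (\<alpha> + \<beta> - 1))) \<partial>lborel) =
    ennreal (cap_const * tail_boundary b)"
proof -
  have "((\<lambda>s. cap_const * odds powr \<beta> * s powr (\<alpha> + \<beta> - 1)) has_integral
      (cap_const * odds powr \<beta> * (b powr (\<alpha> + \<beta> - 1 + 1) / (\<alpha> + \<beta> - 1 + 1)))) {0..b}"
    using \<alpha>_pos \<beta>_pos b_pos by (intro has_integral_mult_right has_integral_powr_from_0) auto
  moreover have "odds powr \<beta> * b powr (\<alpha> + \<beta>) = (1 - b) powr \<beta> * b powr \<alpha>"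
    unfolding odds_def using b_pos b_less_1 by (simp add: powr_divide powr_add field_simps)
  ultimately show ?thesis
    using cap_const_nonneg odds_pos
    by (subst nn_integral_has_integral_lebesgue) (auto simp: tail_boundary_def mult.assoc)
qed

lemma nn_integral_cap_upper:
  "(\<integral>\<^sup>+s. ennreal (indicator {b<..1} s * (cap_const * tail_integrand s)) \<partial>lborel) =
    ennreal (cap_const * integral {b..1} tail_integrand)"
proof -
  have "(\<integral>\<^sup>+s. ennreal (indicator {b<..1} s * (cap_const * tail_integrand s)) \<partial>lborel) =
      (\<integral>\<^sup>+s. ennreal (indicator {b..1} s * (cap_const * tail_integrand s)) \<partial>lborel)"
  proof (rule nn_integral_cong_AE)
    show "AE s in lborel. ennreal (indicator {b<..1} s * (cap_const * tail_integrand s)) =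
        ennreal (indicator {b..1} s * (cap_const * tail_integrand s))"
      using AE_lborel_singleton[of b] by eventually_elim (auto simp: indicator_def)
  qed
  also have "\<dots> = ennreal (cap_const * integral {b..1} tail_integrand)"
    using cap_const_nonneg tail_integrand_nonneg tail_integrand_continuous_on[OF b_pos]
    by (intro nn_integral_has_integral_lebesgue has_integral_mult_right integrable_integral
        integrable_continuous_real) auto
  finally show ?thesis .
qed

lemma nn_integral_sqnorm_density_slice_volume:
  "(\<integral>\<^sup>+s. ennreal (sqnorm_density k s) * ennreal (slice_volume s) \<partial>lborel) =
    ennreal (unit_ball_vol (real (k + q)) * upper_tail)"
proof -
  have "(\<integral>\<^sup>+s. ennreal (sqnorm_density k s) * ennreal (slice_volume s) \<partial>lborel) =
      (\<integral>\<^sup>+s. ennreal (indicator {0..b} s * (cap_const * odds powr \<beta> * s powr (\<alpha> + \<beta> - 1))) +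
        ennreal (indicator {b<..1} s * (cap_const * tail_integrand s)) \<partial>lborel)"
    using sqnorm_density_nonneg slice_volume_nonneg cap_const_nonneg tail_integrand_nonneg
    by (simp add: ennreal_mult[symmetric] ennreal_plus[symmetric] sqnorm_density_mult_slice_volume
        del: ennreal_plus)
  also have "\<dots> = ennreal (cap_const * tail_boundary b) + ennreal (cap_const * integral {b..1} tail_integrand)"
    unfolding nn_integral_cap_lower[symmetric] nn_integral_cap_upper[symmetric] tail_integrand_def
    by (rule nn_integral_add) auto
  also have "\<dots> = ennreal (cap_const * (tail_boundary b + integral {b..1} tail_integrand))"
    using cap_const_nonneg integral_tail_integrand_nonneg \<alpha>_pos \<beta>_pos
    by (simp add: ennreal_plus[symmetric] distrib_left tail_boundary_def del: ennreal_plus)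
  also have "unit_ball_vol (real (k + q)) \<noteq> 0"
    using unit_ball_vol_pos[OF of_nat_0_le_iff, of "k + q"] by linarith
  then have "cap_const = unit_ball_vol (real (k + q)) * tail_const"
    unfolding cap_const_def tail_const_def by simp
  finally show ?thesis
    by (simp add: upper_tail_def mult.assoc)
qed

lemma cone_over_cap_region:
  "{x \<in> space (Leb (k + q)). nrm (k + q) x \<le> 1 \<and>
      restrict (\<lambda>i. x i / nrm (k + q) x) {..<k + q} \<in> {u \<in> space (Leb (k + q)). sqrt b \<le> nrm k u}}
    = cap_region"
proof -
  have "nrm (k + q) x \<le> 1 \<and> sqrt b \<le> nrm k (restrict (\<lambda>i. x i / nrm (k + q) x) {..<k + q}) \<longleftrightarrow>
      (\<Sum>i<k + q. (x i)\<^sup>2) \<le> 1 \<and> b * (\<Sum>i<k + q. (x i)\<^sup>2) \<le> (\<Sum>i<k. (x i)\<^sup>2) \<and> 0 < (\<Sum>i<k + q. (x i)\<^sup>2)"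
    for x :: "nat \<Rightarrow> real"
  proof -
    define Sq where "Sq = (\<Sum>i<k + q. (x i)\<^sup>2)"
    define Sk where "Sk = (\<Sum>i<k. (x i)\<^sup>2)"
    have Sq: "0 \<le> Sq"
      by (simp add: Sq_def sum_nonneg)
    have nrm_x: "nrm (k + q) x = sqrt Sq"
      by (simp add: nrm_eq_sqrt_sum_sq Sq_def)
    have "nrm k (restrict (\<lambda>i. x i / nrm (k + q) x) {..<k + q}) = sqrt (\<Sum>i<k. (x i)\<^sup>2 / Sq)"
      using Sq by (simp add: nrm_eq_sqrt_sum_sq Sq_def[symmetric] power_divide)
    also have "\<dots> = sqrt (Sk / Sq)"
      by (simp add: Sk_def sum_divide_distrib)
    finally have "nrm k (restrict (\<lambda>i. x i / nrm (k + q) x) {..<k + q}) = sqrt (Sk / Sq)" .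
    with Sq show ?thesis
      unfolding Sq_def[symmetric] Sk_def[symmetric] nrm_x
      using b_pos by (cases "Sq = 0") (auto simp: pos_le_divide_eq mult.commute)
  qed
  moreover have "restrict (\<lambda>i. x i / nrm (k + q) x) {..<k + q} \<in> space (Leb (k + q))" for x
    by (simp add: Leb_def space_PiM)
  ultimately show ?thesis
    by (auto simp: cap_region_def Leb_def)
qed

theorem measure_unif_sphere_tail:
  "measure (unif_sphere (k + q)) {u \<in> space (unif_sphere (k + q)). sqrt b \<le> nrm k u} = upper_tail"
proof -
  have vol: "0 < unit_ball_vol (real (k + q))"
    by (rule unit_ball_vol_pos) simp
  have space: "space (unif_sphere (k + q)) = space (Leb (k + q))"
    by (simp add: unif_sphere_def)
  have "{u \<in> space (Leb (k + q)). sqrt b \<le> nrm k u} \<in> sets (Leb (k + q))"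
    using nrm_borel_measurable[of k "k + q"] unfolding Leb_def by measurable
  then have "emeasure (unif_sphere (k + q)) {u \<in> space (Leb (k + q)). sqrt b \<le> nrm k u} =
      emeasure (Leb (k + q)) cap_region / ennreal (unit_ball_vol (real (k + q)))"
    unfolding cone_over_cap_region[symmetric] by (rule emeasure_unif_sphere)
  also have "emeasure (Leb (k + q)) cap_region = ennreal (unit_ball_vol (real (k + q)) * upper_tail)"
    unfolding Leb_def emeasure_cap_region by (rule nn_integral_sqnorm_density_slice_volume)
  also have "ennreal (unit_ball_vol (real (k + q)) * upper_tail) / ennreal (unit_ball_vol (real (k + q)))
      = ennreal upper_tail"
    by (subst divide_ennreal) (use vol upper_tail_nonneg in \<open>auto simp: less_imp_neq[symmetric]\<close>)
  finally show ?thesis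
    using upper_tail_nonneg by (simp add: measure_def space)
qed

end

theorem F_tail_eq_unif_sphere_tail:
  assumes "1 \<le> k" "1 \<le> q" "0 < b" "b < 1"
  shows "measure (F_dist k q) {real q / real k * (b / (1 - b))..} =
    measure (unif_sphere (k + q)) {u \<in> space (unif_sphere (k + q)). sqrt b \<le> nrm k u}"
proof -
  interpret beta_tail k q b
    using assms by unfold_locales
  show ?thesis
    using measure_F_dist_tail measure_unif_sphere_tail by (simp add: F_threshold_def)
qed

section \<open>Gaussian vectors avoid hyperplanes\<close>

lemma PiM_hyperplane_null:
  fixes M :: "nat \<Rightarrow> real measure"
  assumes "product_sigma_finite M" and sets_M: "\<And>i. sets (M i) = sets borel"
    and no_atoms: "\<And>i x. emeasure (M i) {x} = 0"
    and "j < n" "w j \<noteq> 0"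
  shows "{y \<in> space (PiM {..<n} M). ipn n w y = 0} \<in> null_sets (PiM {..<n} M)"
proof -
  interpret product_sigma_finite M
    by (fact assms(1))
  define I where "I = {..<n} - {j}"
  have I: "{..<n} = insert j I" "finite I" "j \<notin> I"
    using assms(4) by (auto simp: I_def)
  define N where "N = {y \<in> space (PiM {..<n} M). ipn n w y = 0}"
  have sets_eq: "sets (PiM {..<n} M) = sets (PiM {..<n} (\<lambda>_. borel :: real measure))"
    by (rule sets_PiM_cong) (auto simp: sets_M)
  have "(\<lambda>y. \<Sum>i<n. w i * y i) \<in> borel_measurable (PiM {..<n} (\<lambda>_. borel :: real measure))"
    by measurable
  then have "(\<lambda>y. \<Sum>i<n. w i * y i) \<in> borel_measurable (PiM {..<n} M)"
    unfolding measurable_cong_sets[OF sets_eq refl] .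
  moreover have "N = (\<lambda>y. \<Sum>i<n. w i * y i) -` {0} \<inter> space (PiM {..<n} M)"
    by (auto simp: N_def ipn_def)
  ultimately have N: "N \<in> sets (PiM {..<n} M)"
    by (auto intro!: measurable_sets)
  have "emeasure (PiM {..<n} M) N = (\<integral>\<^sup>+x. indicator N x \<partial>PiM (insert j I) M)"
    using N by (simp add: I(1))
  also have "\<dots> = (\<integral>\<^sup>+x. (\<integral>\<^sup>+y. indicator N (x(j := y)) \<partial>M j) \<partial>PiM I M)"
    by (rule product_nn_integral_insert[OF I(2,3)]) (use N I(1) in simp)
  also have "\<dots> \<le> (\<integral>\<^sup>+x. 0 \<partial>PiM I M)"
  proof (rule nn_integral_mono)
    fix x
    define y0 where "y0 = - (\<Sum>i\<in>I. w i * x i) / w j"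
    text \<open>With the other coordinates fixed, \<open>N\<close> meets the \<open>j\<close>-th axis only in \<open>y0\<close>.\<close>
    have "indicator N (x(j := y)) \<le> (indicator {y0} y :: ennreal)" for y
    proof (cases "x(j := y) \<in> N")
      case True
      have "ipn n w (x(j := y)) = w j * y + (\<Sum>i\<in>I. w i * x i)"
        unfolding ipn_def I(1) using I(2,3) by (simp add: sum.insert) (intro sum.cong, auto)
      then have "y = y0"
        using True assms(5) by (simp add: N_def y0_def field_simps)
      then show ?thesis
        using True by simp
    qed simp
    then have "(\<integral>\<^sup>+y. indicator N (x(j := y)) \<partial>M j) \<le> (\<integral>\<^sup>+y. indicator {y0} y \<partial>M j)"
      by (intro nn_integral_mono) auto
    also have "\<dots> = 0"
      using no_atoms by (simp add: sets_M)
    finally show "(\<integral>\<^sup>+y. indicator N (x(j := y)) \<partial>M j) \<le> 0" .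
  qed
  finally show ?thesis
    using N by (auto simp: N_def)
qed

lemma AE_gauss_ipn_neq_0:
  assumes "ipn n w w \<noteq> 0" "0 < \<sigma>"
  shows "AE y in gauss n \<mu> \<sigma>. ipn n w y \<noteq> 0"
proof -
  obtain j where j: "j < n" "w j \<noteq> 0"
    using assms(1) ipn_self_eq_0_iff by blast
  define M where "M i = density lborel (normal_density (\<mu> i) \<sigma>)" for i
  have "product_sigma_finite M"
    unfolding product_sigma_finite_def M_def
    using assms(2) by (simp add: prob_space_normal_density prob_space_imp_sigma_finite)
  moreover have "emeasure (M i) {x} = 0" for i x
  proof -
    have "emeasure (M i) {x} = (\<integral>\<^sup>+y. ennreal (normal_density (\<mu> i) \<sigma> y) * indicator {x} y \<partial>lborel)"
      unfolding M_def by (subst emeasure_density) auto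
    also have "\<dots> = 0"
      using AE_lborel_singleton[of x] by (subst nn_integral_cong_AE[where v = "\<lambda>_. 0"]) auto
    finally show ?thesis .
  qed
  ultimately have "{y \<in> space (PiM {..<n} M). ipn n w y = 0} \<in> null_sets (PiM {..<n} M)"
    using j by (intro PiM_hyperplane_null) (auto simp: M_def)
  then have "AE y in PiM {..<n} M. y \<notin> {y \<in> space (PiM {..<n} M). ipn n w y = 0}"
    by (rule AE_not_in)
  then have "AE y in PiM {..<n} M. ipn n w y \<noteq> 0"
    using AE_space by eventually_elim auto
  then show ?thesis
    unfolding gauss_def M_def by simp
qed

section \<open>Coordinates in the basis \<open>V\<close>\<close>

locale residual_basis =
  fixes n d k :: nat and X V :: "nat \<Rightarrow> nat \<Rightarrow> real"
  assumes d_less_n: "d < n" and k_pos: "1 \<le> k" and k_less_d: "k < d"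
    and full_rank: "full_col_rank n d X"
    and V_orthonormal: "\<forall>a < n - d + k. \<forall>b < n - d + k.
           ipn n (col V a) (col V b) = (if a = b then 1 else 0)"
    and V_span: "colspace n V {..<n - d + k} = orth_compl n (colspace n X {k..<d})"
    and V_first: "\<forall>i<k. \<forall>r<n. V r i =
           (X r i - proj n X {Suc i..<d} (col X i) r)
             / nrm n (\<lambda>s. X s i - proj n X {Suc i..<d} (col X i) s)"
begin

abbreviation m :: nat where "m \<equiv> n - d + k"

lemma k_less_m: "k < m"
  using d_less_n by simp

lemma V_orthonormal_cols: "a < m \<Longrightarrow> b < m \<Longrightarrow> ipn n (col V a) (col V b) = (if a = b then 1 else 0)"
  using V_orthonormal by blast

lemma V_perp_tail_colspace:
  assumes "a < m" "w \<in> colspace n X {k..<d}"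
  shows "ipn n (col V a) w = 0"
proof -
  have "col V a \<in> orth_compl n (colspace n X {k..<d})"
    using V_span col_in_colspace[of "{..<m}" a V n] assms(1) by auto
  then show ?thesis
    using assms(2) by (simp add: orth_compl_def)
qed

lemma X_col_decomp:
  assumes "a < k"
  obtains N p where "N \<noteq> 0" "p \<in> colspace n X {Suc a..<d}" "\<forall>r<n. X r a = N * V r a + p r"
proof -
  define p where "p = proj n X {Suc a..<d} (col X a)"
  define N where "N = nrm n (\<lambda>s. X s a - p s)"
  have V_eq: "\<forall>r<n. V r a = (X r a - p r) / N"
    using V_first assms by (simp add: p_def N_def)
  have "N \<noteq> 0"
  proof
    assume "N = 0"
    then have "ipn n (col V a) (col V a) = 0"
      using V_eq by (simp add: ipn_def Defs.col_def)
    moreover have "ipn n (col V a) (col V a) = 1"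
      using V_orthonormal_cols assms k_less_m by simp
    ultimately show False
      by simp
  qed
  moreover have "p \<in> colspace n X {Suc a..<d}"
    unfolding p_def by (rule proj_in_colspace) simp
  moreover have "\<forall>r<n. X r a = N * V r a + p r"
    using V_eq \<open>N \<noteq> 0\<close> by simp
  ultimately show ?thesis
    using that by blast
qed

lemma V_head_in_colspace:
  assumes "a < k"
  shows "col V a \<in> colspace n X {..<d}"
proof -
  obtain N p where N: "N \<noteq> 0" and p: "p \<in> colspace n X {Suc a..<d}"
    and X_eq: "\<forall>r<n. X r a = N * V r a + p r"
    using X_col_decomp[OF assms] .
  have "col X a \<in> colspace n X {..<d}"
    using assms k_less_d by (intro col_in_colspace) auto
  moreover have "colspace n X {Suc a..<d} \<subseteq> colspace n X {..<d}"
    by (rule colspace_mono) auto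
  with p have "p \<in> colspace n X {..<d}"
    by blast
  ultimately have "(\<lambda>r. (1 / N) * col X a r + (- 1 / N) * p r) \<in> colspace n X {..<d}"
    by (rule colspace_lincomb)
  then show ?thesis
    by (rule colspace_cong) (simp add: X_eq N Defs.col_def field_simps)
qed

text \<open>Downward induction on the column index: column \<open>j < k\<close> of \<open>X\<close> is a multiple of
  \<open>V\<^sub>j\<close> plus a combination of later columns.\<close>

lemma V_tail_perp_X_col:
  assumes "k \<le> a" "a < m" "j < d"
  shows "ipn n (col V a) (col X j) = 0"
  using assms(3)
proof (induction "d - j" arbitrary: j rule: less_induct)
  case (less j)
  show ?case
  proof (cases "k \<le> j")
    case True
    then show ?thesis
      using less.prems assms(2) by (intro V_perp_tail_colspace col_in_colspace) auto
  next
    case False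
    obtain N p where p: "p \<in> colspace n X {Suc j..<d}" and X_eq: "\<forall>r<n. X r j = N * V r j + p r"
      using X_col_decomp False by (metis not_le)
    have "ipn n (col V a) (col X j) = ipn n (col V a) (\<lambda>r. N * V r j + p r)"
      by (rule ipn_cong) (simp_all add: X_eq Defs.col_def)
    also have "\<dots> = N * ipn n (col V a) (col V j) + ipn n (col V a) p"
      by (simp add: ipn_add_right ipn_scale_right Defs.col_def)
    also have "ipn n (col V a) (col V j) = 0"
      using V_orthonormal_cols assms False k_less_m by simp
    also have "ipn n (col V a) p = 0"
      using p by (rule ipn_colspace_eq_0) (use less in auto)
    finally show ?thesis
      by simp
  qed
qed

lemma V_tail_perp_colspace:
  assumes "k \<le> a" "a < m" "w \<in> colspace n X {..<d}"
  shows "ipn n (col V a) w = 0"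
  using assms(3) by (rule ipn_colspace_eq_0) (use assms V_tail_perp_X_col in auto)

lemma orth_compl_norm_sq:
  assumes "w \<in> orth_compl n (colspace n X {k..<d})"
  shows "ipn n w w = (\<Sum>a<m. (ipn n (col V a) w)\<^sup>2)"
  using V_orthonormal_cols assms V_span by (intro parseval_colspace) auto

lemma V_coord_resid:
  assumes "a < m"
  shows "ipn n (col V a) (\<lambda>i. y i - proj n X {k..<d} y i) = ipn n (col V a) y"
  using V_perp_tail_colspace[OF assms proj_in_colspace] by (simp add: ipn_diff_right)

lemma resid_norm_sq:
  "(nrm n (\<lambda>i. y i - proj n X {k..<d} y i))\<^sup>2 = (\<Sum>a<m. (ipn n (col V a) y)\<^sup>2)"
proof -
  have "(\<lambda>i. y i - proj n X {k..<d} y i) \<in> orth_compl n (colspace n X {k..<d})"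
    by (simp add: orth_compl_def proj_resid_orthogonal)
  then show ?thesis
    by (simp add: nrm_sq orth_compl_norm_sq V_coord_resid)
qed

lemma full_resid_norm_sq:
  "(nrm n (\<lambda>i. y i - proj n X {..<d} y i))\<^sup>2 = (\<Sum>a\<in>{k..<m}. (ipn n (col V a) y)\<^sup>2)"
proof -
  define e where "e = (\<lambda>i. y i - proj n X {..<d} y i)"
  have perp: "ipn n e w = 0" if "w \<in> colspace n X {..<d}" for w
    using that by (simp add: e_def proj_resid_orthogonal)
  have "colspace n X {k..<d} \<subseteq> colspace n X {..<d}"
    by (rule colspace_mono) auto
  then have "e \<in> orth_compl n (colspace n X {k..<d})"
    using perp by (auto simp: orth_compl_def)
  then have "ipn n e e = (\<Sum>a<m. (ipn n (col V a) e)\<^sup>2)"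
    by (rule orth_compl_norm_sq)
  also have "\<dots> = (\<Sum>a<k. (ipn n (col V a) e)\<^sup>2) + (\<Sum>a\<in>{k..<m}. (ipn n (col V a) e)\<^sup>2)"
    using k_less_m by (simp add: sum_lessThan_split)
  also have "(\<Sum>a<k. (ipn n (col V a) e)\<^sup>2) = 0"
    using perp[OF V_head_in_colspace] by (simp add: ipn_commute[of n _ e])
  also have "(\<Sum>a\<in>{k..<m}. (ipn n (col V a) e)\<^sup>2) = (\<Sum>a\<in>{k..<m}. (ipn n (col V a) y)\<^sup>2)"
    using V_tail_perp_colspace[OF _ _ proj_in_colspace] by (simp add: e_def ipn_diff_right)
  finally show ?thesis
    by (simp add: e_def nrm_sq)
qed

lemma V_head_coord_fitted:
  assumes "a < k"
  shows "ipn n (col V a) (\<lambda>i. \<Sum>j<k. X i j * ols n d X z j) = ipn n (col V a) z"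
proof -
  define fit where "fit = (\<lambda>i. \<Sum>j<d. X i j * ols n d X z j)"
  define tail where "tail = (\<lambda>i. \<Sum>j\<in>{k..<d}. ols n d X z j * X i j)"
  have split: "(\<Sum>j<k. X i j * ols n d X z j) = fit i - tail i" for i
    using sum_lessThan_split[OF less_imp_le[OF k_less_d], of "\<lambda>j. X i j * ols n d X z j"]
    by (simp add: fit_def tail_def mult.commute)
  have "ipn n (col V a) tail = 0"
    using assms k_less_m by (intro V_perp_tail_colspace) (auto simp: tail_def colspace_def)
  moreover have "ipn n (\<lambda>i. z i - fit i) (col V a) = 0"
    using V_head_in_colspace[OF assms]
  proof (rule ipn_colspace_eq_0)
    fix l assume "l \<in> {..<d}"
    then show "ipn n (\<lambda>i. z i - fit i) (col X l) = 0"
      using ols_normal_equations[OF full_rank]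
      by (simp add: fit_def ipn_diff_left ipn_commute[of n _ "col X l"])
  qed
  ultimately show ?thesis
    by (simp add: split ipn_diff_right ipn_diff_left ipn_commute[of n _ "col V a"])
qed

lemma V_coord_fiber:
  assumes "a < m" "w \<in> colspace n X {k..<d}"
  shows "ipn n (col V a) (\<lambda>i. w i + s * (\<Sum>b<m. V i b * u b)) = s * u a"
proof -
  have "ipn n (col V a) (\<lambda>i. \<Sum>b<m. u b * V i b) = (\<Sum>b<m. u b * (if a = b then 1 else 0))"
    using assms(1) V_orthonormal_cols by (simp add: ipn_sum_right)
  also have "\<dots> = u a"
    using assms(1) by (simp add: if_distrib[where f = "\<lambda>x. _ * x"] cong: if_cong)
  finally show ?thesis
    using V_perp_tail_colspace[OF assms]
    by (simp add: ipn_add_right ipn_scale_right mult.commute)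
qed

lemma nrm_head_coords_fitted:
  "nrm k (\<lambda>a. \<Sum>i<n. V i a * (\<Sum>j<k. X i j * ols n d X z j)) = nrm k (\<lambda>a. ipn n (col V a) z)"
proof (rule nrm_cong)
  fix a assume "a < k"
  then show "(\<Sum>i<n. V i a * (\<Sum>j<k. X i j * ols n d X z j)) = ipn n (col V a) z"
    using V_head_coord_fitted[of a z] by (simp add: ipn_def Defs.col_def)
qed

text \<open>The paper's \<open>\<parallel>u\<^sub>1\<^sub>:\<^sub>k\<parallel>\<^sup>2\<close>: the share of the first \<open>k\<close> coordinates \<open>\<langle>V\<^sub>a, y\<rangle>\<close> in
  \<open>\<parallel>y - \<^bold>P\<^sub>-\<^sub>1\<^sub>:\<^sub>k y\<parallel>\<^sup>2\<close>.\<close>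

definition head_fraction :: "(nat \<Rightarrow> real) \<Rightarrow> real" where
  "head_fraction y = (\<Sum>a<k. (ipn n (col V a) y)\<^sup>2) / (\<Sum>a<m. (ipn n (col V a) y)\<^sup>2)"

lemma resid_norm_eq: "nrm n (\<lambda>i. y i - proj n X {k..<d} y i) = sqrt (\<Sum>a<m. (ipn n (col V a) y)\<^sup>2)"
  using resid_norm_sq[of y] by (simp add: real_sqrt_unique nrm_nonneg)

lemma nrm_head_coords_fiber:
  assumes "w \<in> colspace n X {k..<d}"
  shows "nrm k (\<lambda>a. \<Sum>i<n. V i a * (\<Sum>j<k. X i j * ols n d X (\<lambda>i. w i + s * (\<Sum>a<m. V i a * u a)) j))
    = \<bar>s\<bar> * nrm k u"
proof -
  have "nrm k (\<lambda>a. ipn n (col V a) (\<lambda>i. w i + s * (\<Sum>a<m. V i a * u a))) = nrm k (\<lambda>a. s * u a)"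
    using assms k_less_m by (intro nrm_cong V_coord_fiber) auto
  then show ?thesis
    by (simp add: nrm_head_coords_fitted nrm_scale)
qed

lemma nrm_head_coords_resid:
  "nrm k (\<lambda>a. (\<Sum>i<n. V i a * (y i - proj n X {k..<d} y i)) / s) =
    sqrt (\<Sum>a<k. (ipn n (col V a) y)\<^sup>2) / \<bar>s\<bar>"
proof -
  have "nrm k (\<lambda>a. (\<Sum>i<n. V i a * (y i - proj n X {k..<d} y i)) / s) =
      nrm k (\<lambda>a. (1 / s) * ipn n (col V a) y)"
  proof (rule nrm_cong)
    show "(\<Sum>i<n. V i a * (y i - proj n X {k..<d} y i)) / s = 1 / s * ipn n (col V a) y"
      if "a < k" for a
      using V_coord_resid[of a y] that k_less_m by (simp add: ipn_def Defs.col_def)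
  qed
  also have "\<dots> = \<bar>1 / s\<bar> * nrm k (\<lambda>a. ipn n (col V a) y)"
    by (rule nrm_scale)
  finally show ?thesis
    by (simp add: nrm_eq_sqrt_sum_sq)
qed

lemma F_test_reduction:
  fixes y u :: "nat \<Rightarrow> real"
  defines "yhat \<equiv> proj n X {k..<d} y"
  defines "sighat \<equiv> nrm n (\<lambda>i. y i - yhat i)"
    and "b \<equiv> head_fraction y"
  assumes first: "ipn n (col V 0) y \<noteq> 0" and last: "ipn n (col V (m - 1)) y \<noteq> 0"
  shows "0 < b" "b < 1"
    and "((nrm n (\<lambda>i. y i - yhat i))\<^sup>2 - (nrm n (\<lambda>i. y i - proj n X {..<d} y i))\<^sup>2) / real k
           / ((nrm n (\<lambda>i. y i - proj n X {..<d} y i))\<^sup>2 / real (n - d))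
         = real (n - d) / real k * (b / (1 - b))"
    and "nrm k (\<lambda>a. \<Sum>i<n. V i a * (\<Sum>j<k. X i j * ols n d X y j))
           \<le> nrm k (\<lambda>a. \<Sum>i<n. V i a * (\<Sum>j<k. X i j *
                 ols n d X (\<lambda>i. yhat i + sighat * (\<Sum>a<m. V i a * u a)) j))
         \<longleftrightarrow> sqrt b \<le> nrm k u"
    and "nrm k (\<lambda>a. (\<Sum>i<n. V i a * (y i - yhat i)) / sighat) = sqrt b"
proof -
  define A where "A = (\<Sum>a<k. (ipn n (col V a) y)\<^sup>2)"
  define C where "C = (\<Sum>a\<in>{k..<m}. (ipn n (col V a) y)\<^sup>2)"
  have A: "0 < A"
    unfolding A_def using first k_pos by (intro sum_pos2[where i = 0]) auto
  have C: "0 < C"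
    unfolding C_def using last k_less_m by (intro sum_pos2[where i = "m - 1"]) auto
  have AC: "(\<Sum>a<m. (ipn n (col V a) y)\<^sup>2) = A + C"
    unfolding A_def C_def using k_less_m by (intro sum_lessThan_split) simp
  have sighat: "sighat = sqrt (A + C)"
    by (simp add: sighat_def yhat_def resid_norm_eq AC)
  have b: "b = A / (A + C)"
    by (simp add: b_def head_fraction_def AC A_def)
  show "0 < b" "b < 1"
    using A C by (simp_all add: b)
  have "1 - b = C / (A + C)"
    using A C by (simp add: b field_simps)
  then have "b / (1 - b) = A / C"
    using A C by (simp add: b)
  then show "((nrm n (\<lambda>i. y i - yhat i))\<^sup>2 - (nrm n (\<lambda>i. y i - proj n X {..<d} y i))\<^sup>2) / real k
           / ((nrm n (\<lambda>i. y i - proj n X {..<d} y i))\<^sup>2 / real (n - d))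
         = real (n - d) / real k * (b / (1 - b))"
    using A C by (simp add: sighat_def[symmetric] sighat full_resid_norm_sq C_def[symmetric])
  have sqrt_b: "sqrt b = sqrt A / sighat"
    by (simp add: b sighat real_sqrt_divide)
  have sighat_pos: "0 < sighat"
    using A C by (simp add: sighat)
  have "yhat \<in> colspace n X {k..<d}"
    unfolding yhat_def by (rule proj_in_colspace) simp
  then have T_fiber: "nrm k (\<lambda>a. \<Sum>i<n. V i a * (\<Sum>j<k. X i j *
      ols n d X (\<lambda>i. yhat i + sighat * (\<Sum>a<m. V i a * u a)) j)) = sighat * nrm k u"
    using sighat_pos by (simp add: nrm_head_coords_fiber)
  have T_y: "nrm k (\<lambda>a. \<Sum>i<n. V i a * (\<Sum>j<k. X i j * ols n d X y j)) = sqrt A"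
    unfolding nrm_head_coords_fitted by (simp add: nrm_eq_sqrt_sum_sq A_def)
  show "nrm k (\<lambda>a. \<Sum>i<n. V i a * (\<Sum>j<k. X i j * ols n d X y j))
           \<le> nrm k (\<lambda>a. \<Sum>i<n. V i a * (\<Sum>j<k. X i j *
                 ols n d X (\<lambda>i. yhat i + sighat * (\<Sum>a<m. V i a * u a)) j))
         \<longleftrightarrow> sqrt b \<le> nrm k u"
    unfolding T_fiber T_y sqrt_b using sighat_pos by (simp add: divide_le_eq mult.commute)
  show "nrm k (\<lambda>a. (\<Sum>i<n. V i a * (y i - yhat i)) / sighat) = sqrt b"
    using sighat_pos by (simp add: yhat_def nrm_head_coords_resid A_def[symmetric] sqrt_b)
qed

end

theorem lemmaC2:
  fixes n d k :: nat and X V :: "nat \<Rightarrow> nat \<Rightarrow> real" and \<beta> :: "nat \<Rightarrow> real" and \<sigma> :: real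
  assumes "d < n" and "1 \<le> k" and "k < d"
    and "full_col_rank n d X"
    and "0 < \<sigma>"
    and V_orthonormal: "\<forall>a < n - d + k. \<forall>b < n - d + k.
           ipn n (col V a) (col V b) = (if a = b then 1 else 0)"
    and V_span: "colspace n V {..<n - d + k} = orth_compl n (colspace n X {k..<d})"
    and V_first: "\<forall>i<k. \<forall>r<n. V r i =
           (X r i - proj n X {Suc i..<d} (col X i) r)
             / nrm n (\<lambda>s. X s i - proj n X {Suc i..<d} (col X i) s)"
  shows "AE y in gauss n (\<lambda>i. \<Sum>j<d. X i j * \<beta> j) \<sigma>.
    (let m = n - d + k;
         Fstat = (\<lambda>z. ((nrm n (\<lambda>i. z i - proj n X {k..<d} z i))\<^sup>2
                        - (nrm n (\<lambda>i. z i - proj n X {..<d} z i))\<^sup>2) / real k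
                       / ((nrm n (\<lambda>i. z i - proj n X {..<d} z i))\<^sup>2 / real (n - d)));
         pF = measure (F_dist k (n - d)) {Fstat y..};
         yhat = proj n X {k..<d} y;
         sighat = nrm n (\<lambda>i. y i - yhat i);
         u = (\<lambda>a. (\<Sum>i<n. V i a * (y i - yhat i)) / sighat);
         ytil = (\<lambda>ut. (\<lambda>i. yhat i + sighat * (\<Sum>a<m. V i a * ut a)));
         T = (\<lambda>z. nrm k (\<lambda>a. \<Sum>i<n. V i a * (\<Sum>j<k. X i j * ols n d X z j)));
         U = unif_sphere m
     in pF = measure U {ut \<in> space U. T (ytil ut) \<ge> T y}
      \<and> pF = measure U {ut \<in> space U. nrm k ut \<ge> nrm k u})"
proof -
  interpret residual_basis n d k X V
    using assms by unfold_locales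
  have "AE y in gauss n (\<lambda>i. \<Sum>j<d. X i j * \<beta> j) \<sigma>.
      ipn n (col V 0) y \<noteq> 0 \<and> ipn n (col V (m - 1)) y \<noteq> 0"
    using V_orthonormal_cols k_less_m \<open>0 < \<sigma>\<close> by (intro AE_conjI AE_gauss_ipn_neq_0) auto
  then show ?thesis
  proof eventually_elim
    case (elim y)
    note reduction = F_test_reduction[OF conjunct1[OF elim] conjunct2[OF elim]]
    have "1 \<le> n - d"
      using d_less_n by simp
    from F_tail_eq_unif_sphere_tail[OF k_pos this reduction(1,2)]
    have tail: "measure (F_dist k (n - d)) {real (n - d) / real k * (head_fraction y / (1 - head_fraction y))..} =
        measure (unif_sphere m) {u \<in> space (unif_sphere m). sqrt (head_fraction y) \<le> nrm k u}"
      unfolding add.commute[of k "n - d"] .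
    show ?case
      unfolding Let_def reduction(3-5) by (intro conjI tail)
  qed
qed

end
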